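(* Let $n\ge2$, $\alpha>0$, and let $\zeta\in C^\infty_c(\mathbb{R}^n)$ with support contained in $\{|x|<1\}$ and $\zeta\equiv1$ in a neighborhood of the origin. Let $\Omega$ be as in the context with $0\in\Omega$ and $\operatorname{supp}\zeta\subset\Omega$. Define $$u(x)=\zeta(x)\,(-\log|x|)^{-\alpha}\sum_{i\neq j}x_ix_j\quad (x\ne0),\qquad u(0)=0 .$$ Then $u=0$ on $\Gamma$, $\partial_i^2u\in D^{0,\alpha+1}(\overline\Omega)$ for each $i=1,\dots,n$ (in particular $\Delta u\in D^{0,\alpha+1}(\overline\Omega)$), but for $i\ne j$ and every $\beta>\alpha$, $\partial_i\partial_j u\notin D^{0,\beta}(\overline\Omega)$.
   Context: $\Omega\subset\mathbb{R}^n$ is an open, bounded, connected set, locally situated on one side of its boundary $\Gamma$, and $\Gamma$ is of class $C^{2,\lambda}$ for some $0<\lambda\le1$. For $\alpha>0$ and $f\in C(\overline\Omega)$ define $$[f]_\alpha=\sup_{x,y\in\overline\Omega,\ 0<|x-y|<1}\frac{|f(x)-f(y)|}{(-\log|x-y|)^{-\alpha}},$$ and $D^{0,\alpha}(\overline\Omega)=\{f\in C(\overline\Omega):[f]_\alpha<\infty\}$. *)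

theory Defs
  imports "HOL-Analysis.Analysis"
begin

definition dir_curve :: "'n::finite \<Rightarrow> (real^'n \<Rightarrow> real) \<Rightarrow> real^'n \<Rightarrow> real \<Rightarrow> real" where
  "dir_curve i f x = (\<lambda>t. f (x + t *\<^sub>R axis i 1))"

definition has_partial :: "'n::finite \<Rightarrow> (real^'n \<Rightarrow> real) \<Rightarrow> real^'n \<Rightarrow> bool" where
  "has_partial i f x \<longleftrightarrow> dir_curve i f x differentiable (at 0)"

definition partial :: "'n::finite \<Rightarrow> (real^'n \<Rightarrow> real) \<Rightarrow> real^'n \<Rightarrow> real" where
  "partial i f x = deriv (dir_curve i f x) 0"

fun partials :: "'n::finite list \<Rightarrow> (real^'n \<Rightarrow> real) \<Rightarrow> real^'n \<Rightarrow> real" where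
  "partials [] f = f"
| "partials (i # is) f = partial i (partials is f)"

definition smooth_fun :: "(real^'n::finite \<Rightarrow> real) \<Rightarrow> bool" where
  "smooth_fun f \<longleftrightarrow>
     (\<forall>is. continuous_on UNIV (partials is f) \<and> (\<forall>i x. has_partial i (partials is f) x))"

definition tsupp :: "(real^'n::finite \<Rightarrow> real) \<Rightarrow> (real^'n) set" where
  "tsupp f = closure {x. f x \<noteq> 0}"

text \<open>Domain with C^{2,lambda} boundary: near every boundary point p there is a unit vector
nu and a C^{2,lambda} function phi on the hyperplane orthogonal to nu (represented as a function on
R^n that is constant along nu) such that locally Omega is the region strictly above the graph of phi
(in the direction nu).  This also encodes that Omega lies locally on one side of its boundary.\<close>

definition C2_holder_boundary :: "real \<Rightarrow> (real^'n::finite) set \<Rightarrow> bool" where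
  "C2_holder_boundary lam \<Omega> \<longleftrightarrow>
    (\<forall>p\<in>frontier \<Omega>. \<exists>r>0. \<exists>\<nu>::real^'n. \<exists>\<phi>::real^'n \<Rightarrow> real.
       norm \<nu> = 1 \<and>
       (\<forall>x. \<phi> x = \<phi> (x - (x \<bullet> \<nu>) *\<^sub>R \<nu>)) \<and>
       (\<forall>is. length is \<le> 2 \<longrightarrow> continuous_on UNIV (partials is \<phi>)) \<and>
       (\<forall>is. length is \<le> 1 \<longrightarrow> (\<forall>i x. has_partial i (partials is \<phi>) x)) \<and>
       (\<exists>C. \<forall>i j. \<forall>x\<in>cball p r. \<forall>y\<in>cball p r.
            \<bar>partials [i, j] \<phi> x - partials [i, j] \<phi> y\<bar> \<le> C * dist x y powr lam) \<and>
       \<Omega> \<inter> ball p r = {x \<in> ball p r. x \<bullet> \<nu> > \<phi> x})"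

definition admissible_domain :: "real \<Rightarrow> (real^'n::finite) set \<Rightarrow> bool" where
  "admissible_domain lam \<Omega> \<longleftrightarrow>
     open \<Omega> \<and> bounded \<Omega> \<and> connected \<Omega> \<and> \<Omega> \<noteq> {} \<and> 0 < lam \<and> lam \<le> 1 \<and>
     C2_holder_boundary lam \<Omega>"

definition D0 :: "real \<Rightarrow> (real^'n::finite) set \<Rightarrow> (real^'n \<Rightarrow> real) \<Rightarrow> bool" where
  "D0 \<alpha> \<Omega> f \<longleftrightarrow> continuous_on (closure \<Omega>) f \<and>
     (\<exists>C. \<forall>x\<in>closure \<Omega>. \<forall>y\<in>closure \<Omega>. 0 < dist x y \<and> dist x y < 1 \<longrightarrow>
         \<bar>f x - f y\<bar> \<le> C * (- ln (dist x y)) powr (- \<alpha>))"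

end

theory Submission
  imports Defs
begin

text \<open>Near the origin \<open>u = L^(-\<alpha>) P\<close> with \<open>L = -ln |x|\<close> and \<open>P(x) = \<Sum>_(i\<noteq>j) x_i x_j\<close>. Away
from the origin \<open>u\<close> is smooth, because its derivatives stay in the algebra generated by the
coordinates, \<open>|x|^(-2)\<close>, powers of \<open>L\<close> and derivatives of \<open>\<zeta>\<close>. Since \<open>P\<close> contains no monomial
\<open>x_i^2\<close>, the term \<open>L^(-\<alpha>) \<partial>_i\<partial>_i P\<close> vanishes, so \<open>\<partial>_i\<partial>_i u = L^(-\<alpha>-1) H\<^sub>1 + L^(-\<alpha>-2) H\<^sub>2\<close>
with \<open>H\<^sub>1, H\<^sub>2\<close> bounded and homogeneous of degree 0; distinguishing whether \<open>|x - y|\<close> is small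
compared with \<open>|x|\<close> then yields the modulus \<open>(-log |x - y|)^(-\<alpha>-1)\<close>. For \<open>i \<noteq> j\<close>, however,
\<open>\<partial>_i\<partial>_j P = 2\<close>, so \<open>\<partial>_i\<partial>_j u(t e_i) \<ge> 2 (-log t)^(-\<alpha>)\<close> while \<open>\<partial>_i\<partial>_j u(0) = 0\<close>, which rules out
any modulus \<open>(-log t)^(-\<beta>)\<close> with \<open>\<beta> > \<alpha>\<close>.\<close>

definition has_partial_deriv :: "'n::finite \<Rightarrow> (real^'n \<Rightarrow> real) \<Rightarrow> real^'n \<Rightarrow> real \<Rightarrow> bool" where
  "has_partial_deriv k f x D \<longleftrightarrow> ((\<lambda>t. f (x + t *\<^sub>R axis k 1)) has_real_derivative D) (at 0)"

lemma has_partial_deriv_imp_partial: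
  "has_partial_deriv k f x D \<Longrightarrow> has_partial k f x \<and> partial k f x = D"
  unfolding has_partial_deriv_def has_partial_def partial_def dir_curve_def
  by (metis DERIV_imp_deriv real_differentiable_def)

lemma has_partial_imp_has_partial_deriv: "has_partial k f x \<Longrightarrow> has_partial_deriv k f x (partial k f x)"
  unfolding has_partial_deriv_def has_partial_def partial_def dir_curve_def
  by (simp add: DERIV_deriv_iff_real_differentiable)

lemma has_partial_deriv_transform_line:
  assumes "has_partial_deriv k g x D" "e > 0"
    and "\<And>t. \<bar>t\<bar> < e \<Longrightarrow> f (x + t *\<^sub>R axis k 1) = g (x + t *\<^sub>R axis k 1)"
  shows "has_partial_deriv k f x D"
  unfolding has_partial_deriv_def
proof (rule has_field_derivative_transform_within_open[where S="ball 0 e"])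
  show "((\<lambda>t. g (x + t *\<^sub>R axis k 1)) has_real_derivative D) (at 0)"
    using assms(1) by (simp add: has_partial_deriv_def)
  fix t :: real assume "t \<in> ball 0 e"
  then show "g (x + t *\<^sub>R axis k 1) = f (x + t *\<^sub>R axis k 1)" using assms(3) by (simp add: dist_norm)
qed (use assms in auto)

lemma has_partial_deriv_transform_ball:
  assumes "has_partial_deriv k g x D" "e > 0" "\<And>z. z \<in> ball x e \<Longrightarrow> f z = g z"
  shows "has_partial_deriv k f x D"
  by (rule has_partial_deriv_transform_line[OF assms(1,2)]) (simp add: assms(3) dist_norm)

lemma has_partial_deriv_transform_open:
  assumes "has_partial_deriv k g x D" "open U" "x \<in> U" "\<And>z. z \<in> U \<Longrightarrow> f z = g z"
  shows "has_partial_deriv k f x D"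
proof -
  obtain e where "e > 0" "ball x e \<subseteq> U" using assms(2,3) open_contains_ball by blast
  then show ?thesis using has_partial_deriv_transform_ball[OF assms(1)] assms(4) by blast
qed

lemma has_derivative_imp_has_partial_deriv:
  assumes "(f has_derivative f') (at x)"
  shows "has_partial_deriv k f x (f' (axis k 1))"
proof -
  have "((\<lambda>t. x + t *\<^sub>R axis k 1) has_derivative (\<lambda>t. t *\<^sub>R axis k 1)) (at 0)"
    by (auto intro!: derivative_eq_intros)
  moreover have "(f has_derivative f') (at ((\<lambda>t. x + t *\<^sub>R axis k 1) 0))" using assms by simp
  ultimately have "((\<lambda>t. f (x + t *\<^sub>R axis k 1)) has_derivative (f' \<circ> (\<lambda>t. t *\<^sub>R axis k 1))) (at 0)"
    using diff_chain_at by (fastforce simp add: o_def)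
  moreover have "linear f'" using assms has_derivative_linear by blast
  ultimately show ?thesis unfolding has_partial_deriv_def has_field_derivative_def
    by (simp add: o_def linear.scaleR mult.commute[of _ "f' (axis k 1)"])
qed

lemma has_partial_deriv_const: "has_partial_deriv k (\<lambda>x. c) x 0"
  unfolding has_partial_deriv_def by simp

lemma has_partial_deriv_component: "has_partial_deriv k (\<lambda>x. x $ j) x (if j = k then 1 else 0)"
  unfolding has_partial_deriv_def by (auto intro!: derivative_eq_intros simp: axis_def)

lemma has_partial_deriv_add:
  "has_partial_deriv k f x a \<Longrightarrow> has_partial_deriv k g x b \<Longrightarrow> has_partial_deriv k (\<lambda>x. f x + g x) x (a + b)"
  unfolding has_partial_deriv_def by (rule DERIV_add)

lemma has_partial_deriv_diff:
  "has_partial_deriv k f x a \<Longrightarrow> has_partial_deriv k g x b \<Longrightarrow> has_partial_deriv k (\<lambda>x. f x - g x) x (a - b)"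
  unfolding has_partial_deriv_def by (rule DERIV_diff)

lemma has_partial_deriv_mult:
  "has_partial_deriv k f x a \<Longrightarrow> has_partial_deriv k g x b \<Longrightarrow>
    has_partial_deriv k (\<lambda>x. f x * g x) x (a * g x + f x * b)"
  unfolding has_partial_deriv_def by (drule (1) DERIV_mult) (simp add: mult.commute)

lemma has_partial_deriv_cmult: "has_partial_deriv k f x a \<Longrightarrow> has_partial_deriv k (\<lambda>x. c * f x) x (c * a)"
  using has_partial_deriv_mult[OF has_partial_deriv_const[of k c x]] by simp

lemma has_partial_deriv_chain:
  "has_partial_deriv k f x a \<Longrightarrow> DERIV g (f x) :> b \<Longrightarrow> has_partial_deriv k (\<lambda>x. g (f x)) x (b * a)"
  unfolding has_partial_deriv_def using DERIV_chain'[of "\<lambda>t. f (x + t *\<^sub>R axis k 1)" a 0 UNIV g b] by simp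

lemma has_partial_deriv_sum:
  "finite S \<Longrightarrow> (\<And>j. j \<in> S \<Longrightarrow> has_partial_deriv k (f j) x (a j)) \<Longrightarrow>
    has_partial_deriv k (\<lambda>x. \<Sum>j\<in>S. f j x) x (\<Sum>j\<in>S. a j)"
  unfolding has_partial_deriv_def by (rule DERIV_sum)

lemma has_partial_deriv_norm: "x \<noteq> 0 \<Longrightarrow> has_partial_deriv k norm x (x $ k / norm x)"
  using has_derivative_imp_has_partial_deriv[OF has_derivative_norm, of x k]
  by (simp add: inner_axis' sgn_div_norm divide_inverse mult.commute)

lemma has_partial_deriv_inverse_norm_sq:
  assumes "x \<noteq> 0"
  shows "has_partial_deriv k (\<lambda>x. inverse (norm x ^ 2)) x
           ((-2) * (x $ k * (inverse (norm x ^ 2) * inverse (norm x ^ 2))))"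
proof -
  have n: "norm x > 0" using assms by simp
  have "DERIV (\<lambda>s. inverse (s ^ 2)) (norm x) :> - (2 * norm x) / (norm x ^ 2) ^ 2"
    using n by (auto intro!: derivative_eq_intros simp: power2_eq_square divide_inverse)
  from has_partial_deriv_chain[OF has_partial_deriv_norm[OF assms] this] show ?thesis
    using n by (simp add: field_simps power2_eq_square)
qed

lemma has_partial_deriv_neg_ln_norm_powr:
  assumes "x \<noteq> 0" "norm x < 1"
  shows "has_partial_deriv k (\<lambda>x. (- ln (norm x)) powr c) x
           ((-c) * ((- ln (norm x)) powr (c - 1) * (x $ k * inverse (norm x ^ 2))))"
proof -
  have n: "norm x > 0" and l: "- ln (norm x) > 0" using assms by simp_all
  have "DERIV (\<lambda>s. - ln s) (norm x) :> - inverse (norm x)"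
    using n by (auto intro!: derivative_eq_intros simp: divide_inverse)
  from DERIV_fun_powr[OF this l, of c]
  have "DERIV (\<lambda>s. (- ln s) powr c) (norm x) :> c * (- ln (norm x)) powr (c - 1) * (- inverse (norm x))"
    by simp
  from has_partial_deriv_chain[OF has_partial_deriv_norm[OF assms(1)] this] show ?thesis
    using n by (simp add: field_simps power2_eq_square)
qed

section \<open>Smoothness on an open set\<close>

definition smooth_on :: "(real^'n::finite) set \<Rightarrow> (real^'n \<Rightarrow> real) \<Rightarrow> bool" where
  "smooth_on U f \<longleftrightarrow>
     (\<forall>is. continuous_on U (partials is f) \<and> (\<forall>x\<in>U. \<forall>k. has_partial k (partials is f) x))"

lemma partials_transform_open:
  assumes "open U" "\<And>z. z \<in> U \<Longrightarrow> f z = g z" "smooth_on U g" "z \<in> U"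
  shows "partials is f z = partials is g z"
  using assms(4)
proof (induction "is" arbitrary: z)
  case Nil then show ?case using assms(2) by simp
next
  case (Cons k "is")
  have "has_partial k (partials is g) z" using assms(3) Cons.prems unfolding smooth_on_def by blast
  then have "has_partial_deriv k (partials is f) z (partial k (partials is g) z)"
    by (rule has_partial_deriv_transform_open[OF has_partial_imp_has_partial_deriv assms(1) Cons.prems])
      (rule Cons.IH)
  from has_partial_deriv_imp_partial[OF this] show ?case by simp
qed

lemma smooth_on_transform_open:
  assumes "open U" "\<And>z. z \<in> U \<Longrightarrow> f z = g z" "smooth_on U g"
  shows "smooth_on U f"
  unfolding smooth_on_def
proof (intro allI conjI ballI)
  fix "is"
  show "continuous_on U (partials is f)"
    using assms(3) partials_transform_open[OF assms] unfolding smooth_on_def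
    by (metis (mono_tags, lifting) continuous_on_cong)
  fix x k assume "x \<in> U"
  have "has_partial k (partials is g) x" using assms(3) \<open>x \<in> U\<close> unfolding smooth_on_def by blast
  from has_partial_deriv_transform_open[OF has_partial_imp_has_partial_deriv[OF this] assms(1) \<open>x \<in> U\<close>]
  show "has_partial k (partials is f) x"
    using partials_transform_open[OF assms] has_partial_deriv_imp_partial by blast
qed

lemma smooth_on_if_closed_under_partials:
  assumes U: "open U"
    and A: "\<And>f. f \<in> A \<Longrightarrow> continuous_on U f \<and> (\<forall>k. \<exists>h\<in>A. \<forall>x\<in>U. has_partial_deriv k f x (h x))"
    and "f \<in> A"
  shows "smooth_on U f"
proof -
  have partials_in_A: "\<forall>f\<in>A. \<exists>h\<in>A. \<forall>x\<in>U. partials is f x = h x" for "is"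
  proof (induction "is")
    case (Cons k "is")
    show ?case
    proof
      fix f assume "f \<in> A"
      then obtain h where h: "h \<in> A" "\<And>x. x \<in> U \<Longrightarrow> partials is f x = h x" using Cons by blast
      then obtain h' where h': "h' \<in> A" "\<And>x. x \<in> U \<Longrightarrow> has_partial_deriv k h x (h' x)" using A by blast
      have "partials (k # is) f x = h' x" if "x \<in> U" for x
      proof -
        have "has_partial_deriv k (partials is f) x (h' x)"
          using has_partial_deriv_transform_open[OF h'(2)[OF that] U that] h(2) by blast
        from has_partial_deriv_imp_partial[OF this] show ?thesis by simp
      qed
      then show "\<exists>h\<in>A. \<forall>x\<in>U. partials (k # is) f x = h x" using h' by blast
    qed
  qed auto
  show "smooth_on U f"
    unfolding smooth_on_def
  proof (intro allI conjI ballI)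
    fix "is"
    obtain h where h: "h \<in> A" "\<And>x. x \<in> U \<Longrightarrow> partials is f x = h x" using partials_in_A \<open>f \<in> A\<close> by blast
    show "continuous_on U (partials is f)"
      using A[OF h(1)] h(2) by (metis (mono_tags, lifting) continuous_on_cong)
    fix x k assume "x \<in> U"
    obtain h' where "h' \<in> A" "\<And>x. x \<in> U \<Longrightarrow> has_partial_deriv k h x (h' x)" using A[OF h(1)] by blast
    then have "has_partial_deriv k (partials is f) x (h' x)"
      using has_partial_deriv_transform_open U \<open>x \<in> U\<close> h(2) by metis
    then show "has_partial k (partials is f) x" using has_partial_deriv_imp_partial by blast
  qed
qed

lemma partials_append: "partials (js @ is) f = partials js (partials is f)"
  by (induction js) auto

lemma smooth_on_partials: "smooth_on U f \<Longrightarrow> smooth_on U (partials is f)"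
  unfolding smooth_on_def by (simp flip: partials_append)

lemma smooth_on_Un: "open U \<Longrightarrow> open V \<Longrightarrow> smooth_on U f \<Longrightarrow> smooth_on V f \<Longrightarrow> smooth_on (U \<union> V) f"
  unfolding smooth_on_def by (auto intro: continuous_on_open_Un)

lemma partials_zero: "partials is (\<lambda>x. 0::real) = (\<lambda>x. 0)"
proof (induction "is")
  case (Cons k "is")
  have "partial k (\<lambda>x. 0::real) x = 0" for x :: "real^'a"
    using has_partial_deriv_imp_partial[OF has_partial_deriv_const[of k 0 x]] by simp
  then show ?case using Cons by simp
qed simp

lemma smooth_on_zero: "smooth_on U (\<lambda>x. 0)"
  unfolding smooth_on_def partials_zero using has_partial_deriv_imp_partial[OF has_partial_deriv_const] by auto

lemma compact_annulus: "compact {z::'a::{heine_borel,real_normed_vector}. r \<le> norm z \<and> norm z \<le> s}"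
proof -
  have "{z::'a. r \<le> norm z \<and> norm z \<le> s} = cball 0 s \<inter> - ball 0 r" by (auto simp: not_less)
  moreover have "compact (cball (0::'a) s \<inter> - ball 0 r)" by (rule compact_Int_closed) auto
  ultimately show ?thesis by simp
qed

lemma continuous_on_compact_abs_bound:
  fixes g :: "'a::topological_space \<Rightarrow> real"
  assumes "continuous_on K g" "compact K"
  shows "\<exists>B. \<forall>z\<in>K. \<bar>g z\<bar> \<le> B"
  using compact_imp_bounded[OF compact_continuous_image[OF assms]] unfolding bounded_iff by auto

lemma smooth_on_partials_bounded:
  assumes "smooth_on U g" "compact K" "K \<subseteq> U"
  shows "\<exists>B\<ge>0. \<forall>z\<in>K. \<bar>partials is g z\<bar> \<le> B \<and>
            (\<forall>k. has_partial k (partials is g) z \<and> \<bar>partial k (partials is g) z\<bar> \<le> B)"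
proof -
  have c: "continuous_on K (partials js g)" for js
    using assms(1,3) unfolding smooth_on_def by (meson continuous_on_subset)
  obtain B0 where B0: "\<forall>z\<in>K. \<bar>partials is g z\<bar> \<le> B0"
    using continuous_on_compact_abs_bound[OF c assms(2)] by blast
  have "\<forall>k. \<exists>B. \<forall>z\<in>K. \<bar>partials (k # is) g z\<bar> \<le> B"
    using continuous_on_compact_abs_bound[OF c assms(2)] by blast
  then obtain Bk where Bk: "\<And>k z. z \<in> K \<Longrightarrow> \<bar>partials (k # is) g z\<bar> \<le> Bk k" by metis
  define B where "B = \<bar>B0\<bar> + (\<Sum>k\<in>UNIV. \<bar>Bk k\<bar>)"
  have le: "\<bar>Bk k\<bar> \<le> (\<Sum>k\<in>UNIV. \<bar>Bk k\<bar>)" for k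
    by (rule member_le_sum) auto
  have "\<forall>z\<in>K. \<bar>partials is g z\<bar> \<le> B \<and>
            (\<forall>k. has_partial k (partials is g) z \<and> \<bar>partial k (partials is g) z\<bar> \<le> B)"
  proof (intro ballI conjI allI)
    fix z k assume z: "z \<in> K"
    show "\<bar>partials is g z\<bar> \<le> B" using B0 z unfolding B_def by (smt (verit) sum_nonneg)
    show "has_partial k (partials is g) z" using assms(1,3) z unfolding smooth_on_def by blast
    show "\<bar>partial k (partials is g) z\<bar> \<le> B" using Bk[OF z, of k] le[of k] unfolding B_def by simp
  qed
  moreover have "B \<ge> 0" unfolding B_def by (simp add: sum_nonneg)
  ultimately show ?thesis by blast
qed

section \<open>An algebra of functions smooth on the punctured unit ball\<close>

inductive_set log_algebra :: "(real^'n::finite \<Rightarrow> real) \<Rightarrow> (real^'n \<Rightarrow> real) set" for \<zeta> where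
  const: "(\<lambda>x. c) \<in> log_algebra \<zeta>"
| component: "(\<lambda>x. x $ k) \<in> log_algebra \<zeta>"
| inverse_norm_sq: "(\<lambda>x. inverse (norm x ^ 2)) \<in> log_algebra \<zeta>"
| neg_ln_norm_powr: "(\<lambda>x. (- ln (norm x)) powr c) \<in> log_algebra \<zeta>"
| partials: "partials is \<zeta> \<in> log_algebra \<zeta>"
| add: "f \<in> log_algebra \<zeta> \<Longrightarrow> g \<in> log_algebra \<zeta> \<Longrightarrow> (\<lambda>x. f x + g x) \<in> log_algebra \<zeta>"
| mult: "f \<in> log_algebra \<zeta> \<Longrightarrow> g \<in> log_algebra \<zeta> \<Longrightarrow> (\<lambda>x. f x * g x) \<in> log_algebra \<zeta>"

lemma log_algebra_sum:
  "finite S \<Longrightarrow> (\<And>j. j \<in> S \<Longrightarrow> f j \<in> log_algebra \<zeta>) \<Longrightarrow> (\<lambda>x. \<Sum>j\<in>S. f j x) \<in> log_algebra \<zeta>"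
proof (induction S rule: finite_induct)
  case empty then show ?case using log_algebra.const[of 0] by simp
next
  case (insert a S)
  then show ?case using log_algebra.add[of "f a" \<zeta> "\<lambda>x. \<Sum>j\<in>S. f j x"] by simp
qed

lemma log_algebra_closed_under_partials:
  assumes "smooth_fun \<zeta>" "f \<in> log_algebra \<zeta>"
  shows "continuous_on (ball 0 1 - {0}) f \<and>
    (\<forall>k. \<exists>h\<in>log_algebra \<zeta>. \<forall>x\<in>ball 0 1 - {0}. has_partial_deriv k f x (h x))"
  using assms(2)
proof (induction rule: log_algebra.induct)
  case (const c)
  then show ?case using has_partial_deriv_const log_algebra.const by fastforce
next
  case (component j)
  have "\<exists>h\<in>log_algebra \<zeta>. \<forall>x\<in>ball 0 1 - {0}. has_partial_deriv k (\<lambda>x. x $ j) x (h x)" for k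
    using has_partial_deriv_component[of k j] log_algebra.const by fast
  then show ?case by (auto intro: continuous_intros)
next
  case inverse_norm_sq
  have "\<exists>h\<in>log_algebra \<zeta>. \<forall>x\<in>ball 0 1 - {0}. has_partial_deriv k (\<lambda>x. inverse (norm x ^ 2)) x (h x)" for k
    by (rule bexI[of _ "\<lambda>x. (-2) * (x $ k * (inverse (norm x ^ 2) * inverse (norm x ^ 2)))"])
      (use has_partial_deriv_inverse_norm_sq in force,
       intro log_algebra.intros)
  then show ?case by (auto intro!: continuous_intros)
next
  case (neg_ln_norm_powr c)
  have "\<exists>h\<in>log_algebra \<zeta>. \<forall>x\<in>ball 0 1 - {0}. has_partial_deriv k (\<lambda>x. (- ln (norm x)) powr c) x (h x)" for k
    by (rule bexI[of _ "\<lambda>x. (-c) * ((- ln (norm x)) powr (c - 1) * (x $ k * inverse (norm x ^ 2)))"])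
      (use has_partial_deriv_neg_ln_norm_powr in force,
       intro log_algebra.intros)
  then show ?case by (auto intro!: continuous_intros)
next
  case (partials "is")
  have "continuous_on (ball 0 1 - {0}) (partials is \<zeta>)"
    using assms(1) unfolding smooth_fun_def by (meson continuous_on_subset subset_UNIV)
  moreover have "\<forall>x. has_partial_deriv k (partials is \<zeta>) x (partials (k # is) \<zeta> x)" for k
    using assms(1) has_partial_imp_has_partial_deriv unfolding smooth_fun_def by force
  ultimately show ?case using log_algebra.partials by blast
next
  case (add f g)
  have "\<exists>h\<in>log_algebra \<zeta>. \<forall>x\<in>ball 0 1 - {0}. has_partial_deriv k (\<lambda>x. f x + g x) x (h x)" for k
  proof -
    obtain a where "a \<in> log_algebra \<zeta>" "\<forall>x\<in>ball 0 1 - {0}. has_partial_deriv k f x (a x)" using add by blast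
    moreover obtain b where "b \<in> log_algebra \<zeta>" "\<forall>x\<in>ball 0 1 - {0}. has_partial_deriv k g x (b x)" using add by blast
    ultimately show ?thesis
      by (intro bexI[of _ "\<lambda>x. a x + b x"]) (auto intro: has_partial_deriv_add log_algebra.add)
  qed
  then show ?case using add by (auto intro: continuous_intros)
next
  case (mult f g)
  have "\<exists>h\<in>log_algebra \<zeta>. \<forall>x\<in>ball 0 1 - {0}. has_partial_deriv k (\<lambda>x. f x * g x) x (h x)" for k
  proof -
    obtain a where "a \<in> log_algebra \<zeta>" "\<forall>x\<in>ball 0 1 - {0}. has_partial_deriv k f x (a x)" using mult by blast
    moreover obtain b where "b \<in> log_algebra \<zeta>" "\<forall>x\<in>ball 0 1 - {0}. has_partial_deriv k g x (b x)" using mult by blast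
    ultimately show ?thesis
      by (intro bexI[of _ "\<lambda>x. a x * g x + f x * b x"])
        (use mult in \<open>auto intro: has_partial_deriv_mult log_algebra.add log_algebra.mult\<close>)
  qed
  then show ?case using mult by (auto intro: continuous_intros)
qed

lemma log_algebra_smooth_on: "smooth_fun \<zeta> \<Longrightarrow> f \<in> log_algebra \<zeta> \<Longrightarrow> smooth_on (ball 0 1 - {0}) f"
  by (rule smooth_on_if_closed_under_partials[OF _ log_algebra_closed_under_partials]) auto

definition coord_sum :: "real^'n::finite \<Rightarrow> real" where
  "coord_sum x = (\<Sum>k\<in>UNIV. x $ k)"

definition cross_sum :: "real^'n::finite \<Rightarrow> real" where
  "cross_sum x = (\<Sum>i\<in>UNIV. \<Sum>j\<in>UNIV - {i}. x $ i * x $ j)"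

lemma norm_sq_eq_sum: "(norm x)^2 = (\<Sum>k\<in>UNIV. (x $ k)^2)" for x :: "real^'n::finite"
  unfolding power2_norm_eq_inner inner_vec_def by (simp add: power2_eq_square)

lemma cross_sum_eq: "cross_sum x = (coord_sum x)^2 - (norm x)^2"
proof -
  have "cross_sum x = (\<Sum>i\<in>UNIV. x $ i * (coord_sum x - x $ i))"
    unfolding cross_sum_def coord_sum_def by (simp add: sum_distrib_left[symmetric] sum_diff1)
  also have "\<dots> = (\<Sum>i\<in>UNIV. x $ i * coord_sum x) - (\<Sum>i\<in>UNIV. (x $ i)^2)"
    by (simp add: algebra_simps power2_eq_square sum_subtractf)
  also have "\<dots> = (coord_sum x)^2 - (norm x)^2"
    by (simp only: norm_sq_eq_sum) (simp add: coord_sum_def power2_eq_square sum_distrib_right)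
  finally show ?thesis .
qed

lemma coord_sum_scaleR: "coord_sum (c *\<^sub>R x) = c * coord_sum x"
  unfolding coord_sum_def by (simp add: sum_distrib_left)

lemma cross_sum_scaleR: "cross_sum (c *\<^sub>R x) = c^2 * cross_sum x"
  unfolding cross_sum_eq coord_sum_scaleR by (simp add: power_mult_distrib algebra_simps)

lemma coord_sum_axis: "coord_sum (t *\<^sub>R axis i 1) = t"
proof -
  have "\<And>k. t * axis i (1::real) $ k = (if k = i then t else 0)" by (auto simp: axis_def)
  then show ?thesis unfolding coord_sum_def by simp
qed

lemma cross_sum_axis: "cross_sum (t *\<^sub>R axis i (1::real)) = 0"
  unfolding cross_sum_eq coord_sum_axis by (simp add: power2_eq_square)

lemma has_partial_deriv_coord_sum: "has_partial_deriv k coord_sum x 1"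
proof -
  have "has_partial_deriv k (\<lambda>x. \<Sum>j\<in>UNIV. x $ j) x (\<Sum>j\<in>UNIV. if j = k then 1 else 0)"
    by (intro has_partial_deriv_sum has_partial_deriv_component) simp
  then show ?thesis by (simp add: coord_sum_def[abs_def])
qed

lemma has_partial_deriv_norm_sq: "has_partial_deriv k (\<lambda>x. (norm x)^2) x (2 * x $ k)"
proof -
  have d: "DERIV (\<lambda>s. s^2) (x $ j) :> 2 * x $ j" for j
    by (auto intro!: derivative_eq_intros)
  have "has_partial_deriv k (\<lambda>x. \<Sum>j\<in>UNIV. (x $ j)^2) x (\<Sum>j\<in>UNIV. 2 * x $ j * (if j = k then 1 else 0))"
    by (intro has_partial_deriv_sum has_partial_deriv_chain[OF has_partial_deriv_component d]) simp
  moreover have "(\<lambda>x. (norm x)^2) = (\<lambda>x::real^'a. \<Sum>j\<in>UNIV. (x $ j)^2)" using norm_sq_eq_sum by blast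
  moreover have "(\<Sum>j\<in>UNIV. 2 * x $ j * (if j = k then 1 else 0)) = 2 * x $ k"
    by (simp add: if_distrib[where f="\<lambda>y. 2 * x $ _ * y"] cong: if_cong)
  ultimately show ?thesis by simp
qed

lemma has_partial_deriv_cross_sum: "has_partial_deriv k cross_sum x (2 * (coord_sum x - x $ k))"
proof -
  have "DERIV (\<lambda>s. s^2) (coord_sum x) :> 2 * coord_sum x" by (auto intro!: derivative_eq_intros)
  from has_partial_deriv_diff[OF has_partial_deriv_chain[OF has_partial_deriv_coord_sum this]
      has_partial_deriv_norm_sq]
  show ?thesis by (simp add: cross_sum_eq[abs_def] algebra_simps)
qed

lemma coord_sum_in_log_algebra: "coord_sum \<in> log_algebra \<zeta>"
  unfolding coord_sum_def[abs_def] by (intro log_algebra_sum log_algebra.component finite)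

lemma cross_sum_in_log_algebra: "cross_sum \<in> log_algebra \<zeta>"
  unfolding cross_sum_def[abs_def]
  by (intro log_algebra_sum log_algebra.mult log_algebra.component finite_Diff finite)

section \<open>The logarithmic modulus \<open>(-ln s)^(-c)\<close>\<close>

definition log_modulus :: "real \<Rightarrow> real \<Rightarrow> real" where
  "log_modulus c s = (- ln s) powr (- c)"

lemma log_modulus_nonneg: "log_modulus c s \<ge> 0"
  unfolding log_modulus_def by simp

lemma log_modulus_pos: "0 < s \<Longrightarrow> s < 1 \<Longrightarrow> log_modulus c s > 0"
  unfolding log_modulus_def by simp

lemma log_modulus_eq_inverse: "log_modulus c s = inverse ((- ln s) powr c)"
  unfolding log_modulus_def by (simp add: powr_minus)

lemma log_modulus_mono:
  assumes "c \<ge> 0" "0 < s" "s \<le> t" "t < 1"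
  shows "log_modulus c s \<le> log_modulus c t"
  unfolding log_modulus_def by (rule powr_mono2') (use assms in auto)

lemma log_modulus_antimono_exponent:
  assumes "c \<le> c'" "0 < s" "s \<le> exp (-1)"
  shows "log_modulus c' s \<le> log_modulus c s"
proof -
  have "ln s \<le> ln (exp (-1))" using assms by (subst ln_le_cancel_iff) auto
  then have "1 \<le> - ln s" by simp
  then show ?thesis unfolding log_modulus_def by (intro powr_mono) (use assms in auto)
qed

lemma log_modulus_double:
  assumes c: "c \<ge> 0" and d: "0 < d" "d \<le> 1/4"
  shows "log_modulus c (2 * d) \<le> 2 powr c * log_modulus c d"
proof -
  have "ln d \<le> ln (1/4)" using d by (subst ln_le_cancel_iff) auto
  also have "ln (1/4::real) = - 2 * ln 2"
  proof -
    have "ln (1/4::real) = ln 1 - ln 4" by (rule ln_divide_pos) auto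
    moreover have "ln (4::real) = ln 2 + ln 2" using ln_mult_pos[of 2 2] by simp
    ultimately show ?thesis by simp
  qed
  finally have "ln d \<le> - 2 * ln 2" .
  moreover have "ln (2 * d) = ln 2 + ln d" using d by (intro ln_mult_pos) auto
  ultimately have l: "(- ln d) / 2 \<le> - ln (2 * d)" by simp
  have p: "0 < (- ln d) / 2" using d by simp
  have "log_modulus c (2 * d) \<le> ((- ln d) / 2) powr (- c)"
    unfolding log_modulus_def by (rule powr_mono2'[OF _ p l]) (use c in simp)
  also have "\<dots> = (- ln d) powr (- c) / 2 powr (- c)" by (rule powr_divide)
  also have "\<dots> = 2 powr c * log_modulus c d"
    by (simp add: log_modulus_def powr_minus[of 2 c] divide_inverse)
  finally show ?thesis .
qed

lemma one_plus_ln_le_powr: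
  fixes t \<gamma> :: real
  assumes g: "\<gamma> > 0" and t: "t \<ge> 1"
  shows "1 + ln t \<le> (1 + \<gamma>) * t powr (1 / \<gamma>)"
proof -
  have tp: "t powr (1/\<gamma>) \<ge> 1" using t g ge_one_powr_ge_zero[of t "1/\<gamma>"] by simp
  have "ln (t powr (1/\<gamma>)) \<le> t powr (1/\<gamma>) - 1" using t by (intro ln_le_minus_one) auto
  then have "ln t / \<gamma> \<le> t powr (1/\<gamma>) - 1" using t by (simp add: ln_powr)
  then have "ln t \<le> \<gamma> * (t powr (1/\<gamma>) - 1)" using g by (simp add: divide_le_eq mult.commute)
  then show ?thesis using tp g by (simp add: algebra_simps)
qed

lemma le_log_modulus:
  assumes g: "\<gamma> > 0" and d: "0 < d" "d < 1"
  shows "d \<le> (1 + \<gamma>) powr \<gamma> * log_modulus \<gamma> d"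
proof -
  define t where "t = 1 / d"
  have t1: "t > 1" unfolding t_def using d by simp
  have lnt: "ln t > 0" using t1 by simp
  have ld: "- ln d = ln t" unfolding t_def using d by (simp add: ln_divide_pos)
  have "ln t \<le> (1 + \<gamma>) * t powr (1 / \<gamma>)" using one_plus_ln_le_powr[OF g, of t] t1 by simp
  then have "(ln t) powr \<gamma> \<le> ((1 + \<gamma>) * t powr (1 / \<gamma>)) powr \<gamma>"
    using lnt g by (intro powr_mono2) auto
  also have "\<dots> = (1 + \<gamma>) powr \<gamma> * t" using g t1 by (simp add: powr_mult powr_powr)
  finally have C: "(ln t) powr \<gamma> \<le> (1 + \<gamma>) powr \<gamma> * t" .
  have gp: "(1 + \<gamma>) powr \<gamma> > 0" using g by simp
  have "d = (1 + \<gamma>) powr \<gamma> / ((1 + \<gamma>) powr \<gamma> * t)" unfolding t_def using d gp by simp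
  also have "\<dots> \<le> (1 + \<gamma>) powr \<gamma> / (ln t) powr \<gamma>"
    using C lnt gp t1 by (intro divide_left_mono) (auto intro!: mult_pos_pos)
  also have "\<dots> = (1 + \<gamma>) powr \<gamma> * log_modulus \<gamma> d"
    unfolding log_modulus_eq_inverse ld by (simp add: divide_inverse)
  finally show ?thesis .
qed

lemma log_modulus_times_ratio_le:
  assumes g: "\<gamma> > 0" and d: "0 < d" "d \<le> a" "a \<le> exp (-1)"
  shows "log_modulus \<gamma> a * (d / a) \<le> (1 + \<gamma>) powr \<gamma> * log_modulus \<gamma> d"
proof -
  define l where "l = - ln a"
  define t where "t = a / d"
  have a: "a > 0" using d by simp
  have "ln a \<le> ln (exp (-1))" using d a by (subst ln_le_cancel_iff) auto
  then have l1: "l \<ge> 1" unfolding l_def by simp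
  have t1: "t \<ge> 1" unfolding t_def using d by simp
  have lnt: "ln t \<ge> 0" using t1 by simp
  have ld: "- ln d = l + ln t" unfolding l_def t_def using a d by (simp add: ln_divide_pos)
  have "l + ln t \<le> l * (1 + ln t)"
    using l1 lnt by (simp add: algebra_simps mult_le_cancel_right1)
  also have "\<dots> \<le> l * ((1 + \<gamma>) * t powr (1 / \<gamma>))"
    using one_plus_ln_le_powr[OF g t1] l1 by (intro mult_left_mono) auto
  finally have "(l + ln t) powr \<gamma> \<le> (l * ((1 + \<gamma>) * t powr (1 / \<gamma>))) powr \<gamma>"
    using l1 lnt g by (intro powr_mono2) auto
  also have "\<dots> = l powr \<gamma> * (1 + \<gamma>) powr \<gamma> * t"
    using g t1 by (simp add: powr_mult powr_powr)
  finally have C: "(l + ln t) powr \<gamma> \<le> l powr \<gamma> * (1 + \<gamma>) powr \<gamma> * t" .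
  have lp: "l powr \<gamma> > 0" and gp: "(1 + \<gamma>) powr \<gamma> > 0" and pp: "(l + ln t) powr \<gamma> > 0"
    using l1 lnt g by simp_all
  have "log_modulus \<gamma> a * (d / a) = (1 + \<gamma>) powr \<gamma> / (l powr \<gamma> * (1 + \<gamma>) powr \<gamma> * t)"
    unfolding log_modulus_eq_inverse l_def t_def using a d gp by (simp add: field_simps)
  also have "\<dots> \<le> (1 + \<gamma>) powr \<gamma> / (l + ln t) powr \<gamma>"
    using C pp gp lp t1 by (intro divide_left_mono) (auto intro!: mult_pos_pos)
  also have "\<dots> = (1 + \<gamma>) powr \<gamma> * log_modulus \<gamma> d"
    unfolding log_modulus_eq_inverse ld by (simp add: divide_inverse)
  finally show ?thesis .
qed

lemma log_modulus_diff_le: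
  assumes c: "c > 0" and ab: "0 < b" "b \<le> a" "a \<le> exp (-1)" "a \<le> 2 * b"
  shows "\<bar>log_modulus c a - log_modulus c b\<bar> \<le> 2 * c * log_modulus c a * (a - b) / a"
proof (cases "b = a")
  case False
  then have ba: "b < a" using ab by simp
  have e1: "exp (-1::real) < 1" by simp
  define D where "D s = c * (log_modulus (c + 1) s / s)" for s
  have der: "DERIV (log_modulus c) s :> D s" if "b \<le> s" "s \<le> a" for s
  proof -
    have s: "0 < s" "s < 1" using that ab e1 by linarith+
    have "DERIV (\<lambda>s. - ln s) s :> - inverse s"
      using s by (auto intro!: derivative_eq_intros simp: divide_inverse)
    from DERIV_fun_powr[OF this, of "- c"] s
    have "DERIV (log_modulus c) s :> (- c) * (- ln s) powr (- c - 1) * (- inverse s)"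
      unfolding log_modulus_def[abs_def] by simp
    moreover have "(- ln s) powr (- c - 1) = log_modulus (c + 1) s"
      unfolding log_modulus_def by (rule arg_cong[where f="\<lambda>y. (- ln s) powr y"]) simp
    then have "(- c) * (- ln s) powr (- c - 1) * (- inverse s) = D s"
      unfolding D_def using s by (simp add: field_simps)
    ultimately show ?thesis by simp
  qed
  obtain z where z: "b < z" "z < a" "log_modulus c a - log_modulus c b = (a - b) * D z"
    using MVT2[OF ba, of "log_modulus c" D] der by auto
  have zs: "0 < z" "z < 1" using z ab e1 by linarith+
  have "log_modulus (c + 1) z \<le> log_modulus c z"
    using zs z ab by (intro log_modulus_antimono_exponent) auto
  also have "\<dots> \<le> log_modulus c a"
    using zs z c ab e1 by (intro log_modulus_mono) linarith+
  finally have "log_modulus (c + 1) z / z \<le> log_modulus c a / z" using zs by (simp add: divide_right_mono)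
  also have "\<dots> \<le> log_modulus c a / (a / 2)"
    using z ab log_modulus_nonneg[of c a] by (intro divide_left_mono) auto
  finally have Q: "log_modulus (c + 1) z / z \<le> 2 * log_modulus c a / a" by (simp add: mult.commute)
  have "0 \<le> D z" unfolding D_def using c zs log_modulus_nonneg by simp
  then have "\<bar>log_modulus c a - log_modulus c b\<bar> = (a - b) * D z" using z ba by simp
  also have "\<dots> \<le> (a - b) * (c * (2 * log_modulus c a / a))" unfolding D_def
    using Q c ba by (intro mult_left_mono) auto
  finally show ?thesis by (simp add: field_simps)
qed simp

lemma filterlim_norm_at_0: "filterlim norm (at_right 0) (at (0::'a::real_normed_vector))"
  unfolding filterlim_at
  by (auto simp: eventually_at_filter intro!: tendsto_norm_zero tendsto_ident_at)

lemma log_modulus_norm_tendsto_0: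
  assumes "c > 0"
  shows "((\<lambda>z. log_modulus c (norm z)) \<longlongrightarrow> 0) (at (0::'a::real_normed_vector))"
proof -
  have "LIM z at (0::'a). ln (norm z) :> at_bot" by (rule filterlim_compose[OF ln_at_0 filterlim_norm_at_0])
  then have "LIM z at (0::'a). - ln (norm z) :> at_top" using filterlim_uminus_at_bot[THEN iffD1] by blast
  from tendsto_neg_powr[OF _ this, of "-c"] assms show ?thesis unfolding log_modulus_def by simp
qed

lemma DERIV_times_log_modulus_at_0:
  assumes "c > 0"
  shows "((\<lambda>t. if t = 0 then 0 else 2 * (t * (- ln \<bar>t\<bar>) powr (-c))) has_real_derivative 0) (at 0)"
  unfolding has_field_derivative_iff
proof (rule tendsto_cong[THEN iffD1, rotated])
  show "((\<lambda>y::real. 2 * log_modulus c (norm y)) \<longlongrightarrow> 0) (at 0)"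
    using tendsto_mult_right_zero[OF log_modulus_norm_tendsto_0[OF assms, where 'a=real], of 2] by simp
qed (auto simp: eventually_at_filter log_modulus_def)

lemma exists_small_neg_ln_powr:
  fixes C c m e :: real
  assumes "c < 0" "m > 0" "e > 0"
  shows "\<exists>t. 0 < t \<and> t < m \<and> C * (- ln t) powr c < e"
proof -
  have "((\<lambda>M::real. M powr c) \<longlongrightarrow> 0) at_top"
    using assms(1) by (intro tendsto_neg_powr filterlim_ident) auto
  then have "((\<lambda>M::real. C * M powr c) \<longlongrightarrow> 0) at_top"
    using tendsto_mult_right_zero by blast
  then have "eventually (\<lambda>M::real. C * M powr c < e) at_top"
    using assms(3) by (rule order_tendstoD)
  moreover have "eventually (\<lambda>M::real. M > max 0 (- ln m)) at_top" by (rule eventually_gt_at_top)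
  ultimately obtain M where M: "C * M powr c < e" "M > max 0 (- ln m)"
    using eventually_happens[OF eventually_conj] by fastforce
  have "exp (- M) < exp (ln m)" using M by simp
  then show ?thesis using M assms(2) by (intro exI[of _ "exp (- M)"]) auto
qed

lemma abs_diff_le_of_DERIV_bound:
  fixes h h' :: "real \<Rightarrow> real"
  assumes "\<And>s. \<bar>s\<bar> \<le> \<bar>t\<bar> \<Longrightarrow> DERIV h s :> h' s" "\<And>s. \<bar>s\<bar> \<le> \<bar>t\<bar> \<Longrightarrow> \<bar>h' s\<bar> \<le> B"
  shows "\<bar>h t - h 0\<bar> \<le> B * \<bar>t\<bar>"
proof (cases t "0::real" rule: linorder_cases)
  case less
  obtain z where z: "t < z" "z < 0" "h 0 - h t = (0 - t) * h' z"
    using MVT2[OF less, of h h'] assms(1) less by auto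
  then have "\<bar>h t - h 0\<bar> = \<bar>t\<bar> * \<bar>h' z\<bar>" by (simp add: abs_mult abs_minus_commute)
  also have "\<dots> \<le> \<bar>t\<bar> * B" using assms(2)[of z] z by (intro mult_left_mono) auto
  finally show ?thesis by (simp add: mult.commute)
next
  case greater
  obtain z where z: "0 < z" "z < t" "h t - h 0 = (t - 0) * h' z"
    using MVT2[OF greater, of h h'] assms(1) greater by auto
  then show ?thesis using assms(2)[of z] greater by (simp add: abs_mult mult.commute mult_left_mono)
qed simp

lemma abs_diff_along_axis_le:
  fixes f :: "real^'n::finite \<Rightarrow> real"
  assumes "\<And>s. \<bar>s\<bar> \<le> \<bar>t\<bar> \<Longrightarrow>
      has_partial k f (z + s *\<^sub>R axis k 1) \<and> \<bar>partial k f (z + s *\<^sub>R axis k 1)\<bar> \<le> B"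
  shows "\<bar>f (z + t *\<^sub>R axis k 1) - f z\<bar> \<le> B * \<bar>t\<bar>"
proof -
  define h where "h s = f (z + s *\<^sub>R axis k 1)" for s
  have "\<bar>h t - h 0\<bar> \<le> B * \<bar>t\<bar>"
  proof (rule abs_diff_le_of_DERIV_bound)
    fix s assume s: "\<bar>s\<bar> \<le> \<bar>t\<bar>"
    have "(\<lambda>r. h (r + s)) = (\<lambda>r. f ((z + s *\<^sub>R axis k 1) + r *\<^sub>R axis k 1))"
      by (rule ext) (simp add: h_def scaleR_add_left add_ac)
    then have "((\<lambda>r. h (r + s)) has_real_derivative partial k f (z + s *\<^sub>R axis k 1)) (at 0)"
      using has_partial_imp_has_partial_deriv assms[OF s] unfolding has_partial_deriv_def by metis
    then show "DERIV h s :> partial k f (z + s *\<^sub>R axis k 1)"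
      using DERIV_shift[of h _ 0 s] by simp
    show "\<bar>partial k f (z + s *\<^sub>R axis k 1)\<bar> \<le> B" using assms[OF s] by blast
  qed
  then show ?thesis by (simp add: h_def)
qed

text \<open>Move from \<open>x\<close> to \<open>y\<close> one coordinate at a time; all intermediate points stay in
\<open>cball x (dist x y)\<close>.\<close>

lemma lipschitz_bound_of_partials:
  fixes f :: "real^'n::finite \<Rightarrow> real"
  assumes B: "B \<ge> 0"
    and H: "\<And>z k. z \<in> cball x (dist x y) \<Longrightarrow> has_partial k f z \<and> \<bar>partial k f z\<bar> \<le> B"
  shows "\<bar>f y - f x\<bar> \<le> real CARD('n) * B * dist x y"
proof -
  define mix where "mix F = (\<chi> k. if k \<in> F then y $ k else x $ k)" for F :: "'n set"
  have "\<bar>f (mix F) - f x\<bar> \<le> real (card F) * B * dist x y" if "finite F" for F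
    using that
  proof (induction F rule: finite_induct)
    case empty
    have "mix {} = x" by (simp add: mix_def vec_eq_iff)
    then show ?case by simp
  next
    case (insert k F)
    define t where "t = y $ k - x $ k"
    have step: "mix (insert k F) = mix F + t *\<^sub>R axis k 1"
      unfolding vec_eq_iff
    proof
      fix j show "mix (insert k F) $ j = (mix F + t *\<^sub>R axis k 1) $ j"
        using insert(2) by (cases "j = k") (simp_all add: mix_def t_def axis_def)
    qed
    have t: "\<bar>t\<bar> \<le> dist x y" unfolding t_def dist_norm
      using component_le_norm_cart[of "y - x" k] by (simp add: norm_minus_commute)
    have "mix F + s *\<^sub>R axis k 1 \<in> cball x (dist x y)" if "\<bar>s\<bar> \<le> \<bar>t\<bar>" for s
    proof -
      have "\<bar>(mix F + s *\<^sub>R axis k 1 - x) $ j\<bar> \<le> \<bar>(y - x) $ j\<bar>" for j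
        using insert(2) that by (cases "j = k") (simp_all add: mix_def axis_def t_def)
      then have "norm (mix F + s *\<^sub>R axis k 1 - x) \<le> norm (y - x)"
        by (intro norm_le_componentwise_cart) simp
      then show ?thesis by (simp add: dist_norm norm_minus_commute)
    qed
    then have "\<bar>f (mix (insert k F)) - f (mix F)\<bar> \<le> B * \<bar>t\<bar>"
      unfolding step using H by (intro abs_diff_along_axis_le) blast
    also have "\<dots> \<le> B * dist x y" using B t by (rule mult_left_mono[rotated])
    finally show ?case using insert by (simp add: algebra_simps)
  qed
  from this[of UNIV] show ?thesis by (simp add: mix_def)
qed

lemma smooth_on_lipschitz_on_annulus:
  fixes f :: "real^'n::finite \<Rightarrow> real"
  assumes "smooth_on U f" "0 < r" "{z. r \<le> norm z \<and> norm z \<le> R + r} \<subseteq> U"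
  shows "\<exists>C\<ge>0. \<forall>x y. 2 * r \<le> norm x \<longrightarrow> norm x \<le> R \<longrightarrow> dist x y \<le> r \<longrightarrow>
           \<bar>f x - f y\<bar> \<le> C * dist x y"
proof -
  obtain B where B: "B \<ge> 0"
    "\<And>z k. r \<le> norm z \<and> norm z \<le> R + r \<Longrightarrow> has_partial k f z \<and> \<bar>partial k f z\<bar> \<le> B"
    using smooth_on_partials_bounded[OF assms(1) compact_annulus assms(3), of "[]"] by auto
  have "\<bar>f x - f y\<bar> \<le> real CARD('n) * B * dist x y"
    if "2 * r \<le> norm x" "norm x \<le> R" "dist x y \<le> r" for x y
  proof -
    have "r \<le> norm z \<and> norm z \<le> R + r" if "z \<in> cball x (dist x y)" for z
      using that \<open>2 * r \<le> norm x\<close> \<open>norm x \<le> R\<close> \<open>dist x y \<le> r\<close>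
        norm_triangle_ineq[of z "x - z"] norm_triangle_ineq[of x "z - x"]
      by (auto simp: dist_norm norm_minus_commute)
    then show ?thesis
      using lipschitz_bound_of_partials[OF B(1), of x y f] B(2) by (simp add: abs_minus_commute)
  qed
  then show ?thesis using B(1) by (intro exI[of _ "real CARD('n) * B"]) auto
qed

text \<open>The estimates enjoyed by a function that is homogeneous of degree 0 and smooth away from
the origin.\<close>

definition degree0_bounds :: "(real^'n::finite \<Rightarrow> real) \<Rightarrow> real \<Rightarrow> bool" where
  "degree0_bounds H B \<longleftrightarrow> B \<ge> 0 \<and> (\<forall>x. x \<noteq> 0 \<longrightarrow> \<bar>H x\<bar> \<le> B) \<and>
     (\<forall>x y. x \<noteq> 0 \<longrightarrow> 2 * dist x y \<le> norm x \<longrightarrow> \<bar>H x - H y\<bar> \<le> B * (dist x y / norm x))"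

lemma degree0_bounds_mono: "degree0_bounds H B \<Longrightarrow> B \<le> B' \<Longrightarrow> degree0_bounds H B'"
proof -
  assume B: "degree0_bounds H B" and BB': "B \<le> B'"
  have "B * (dist x y / norm x) \<le> B' * (dist x y / norm x)" for x y :: "real^'n"
    using BB' by (intro mult_right_mono) auto
  then show ?thesis using B BB' unfolding degree0_bounds_def by (meson order_trans)
qed

lemma degree0_bounds_if_homogeneous:
  fixes H :: "real^'n::finite \<Rightarrow> real"
  assumes smooth: "smooth_on (ball 0 1 - {0}) H" and hom: "\<And>c x. c > 0 \<Longrightarrow> H (c *\<^sub>R x) = H x"
  shows "\<exists>B. degree0_bounds H B"
proof -
  have annulus: "{z::real^'n. 1/4 \<le> norm z \<and> norm z \<le> 1/2 + 1/4} \<subseteq> ball 0 1 - {0}" by auto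
  have "continuous_on (ball 0 1 - {0}) H"
    using smooth unfolding smooth_on_def by (metis partials.simps(1))
  then obtain B0 where B0: "\<forall>z\<in>{z::real^'n. 1/4 \<le> norm z \<and> norm z \<le> 1/2 + 1/4}. \<bar>H z\<bar> \<le> B0"
    using continuous_on_compact_abs_bound[OF continuous_on_subset compact_annulus] annulus by blast
  have "(0::real) < 1/4" by simp
  from smooth_on_lipschitz_on_annulus[OF smooth this annulus]
  obtain C where C: "C \<ge> 0" "\<forall>x y. 2 * (1/4) \<le> norm x \<longrightarrow> norm x \<le> 1/2 \<longrightarrow> dist x y \<le> 1/4 \<longrightarrow>
      \<bar>H x - H y\<bar> \<le> C * dist x y"
    by blast
  have scale: "H x = H (l *\<^sub>R x)" "norm (l *\<^sub>R x) = 1/2" if "x \<noteq> 0" "l = 1 / (2 * norm x)" for x l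
    using hom[of l x] that by auto
  have "\<bar>H x\<bar> \<le> max B0 C" if "x \<noteq> 0" for x
    using B0 scale[OF that refl] by (simp add: le_max_iff_disj)
  moreover have "\<bar>H x - H y\<bar> \<le> max B0 C * (dist x y / norm x)" if "x \<noteq> 0" "2 * dist x y \<le> norm x" for x y
  proof -
    define l where "l = 1 / (2 * norm x)"
    have l: "l > 0" unfolding l_def using that by simp
    have d: "dist (l *\<^sub>R x) (l *\<^sub>R y) = dist x y / (2 * norm x)"
      using l unfolding l_def by (simp add: dist_norm scaleR_diff_right[symmetric])
    have "dist x y / (2 * norm x) \<le> 1/4"
      using that by (simp add: divide_le_eq)
    then have "\<bar>H (l *\<^sub>R x) - H (l *\<^sub>R y)\<bar> \<le> C * dist (l *\<^sub>R x) (l *\<^sub>R y)"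
      by (intro C(2)[rule_format]) (use scale(2)[OF that(1) l_def] d in simp_all)
    also have "\<dots> = C * (dist x y / (2 * norm x))" unfolding d ..
    also have "\<dots> \<le> C * (dist x y / norm x)"
      using C(1) that by (intro mult_left_mono divide_left_mono) auto
    also have "\<dots> \<le> max B0 C * (dist x y / norm x)" by (intro mult_right_mono) auto
    finally show ?thesis using hom[OF l] by simp
  qed
  ultimately have "degree0_bounds H (max B0 C)"
    unfolding degree0_bounds_def using C(1) by auto
  then show ?thesis by blast
qed

lemma log_modulus_product_diff_le:
  fixes c c' a b d B h1 h2 :: real
  assumes c: "0 < c" "c \<le> c'" and ab: "0 < b" "b \<le> a" "a \<le> exp (-1)" "a \<le> 2 * b" "a - b \<le> d"
    and B: "B \<ge> 0" "\<bar>h1\<bar> \<le> B" "\<bar>h1 - h2\<bar> \<le> B * (d / a)"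
  shows "\<bar>log_modulus c' a * h1 - log_modulus c' b * h2\<bar> \<le> (2 * c' + 1) * B * (log_modulus c a * (d / a))"
proof -
  let ?P = "log_modulus c' a" and ?Q = "log_modulus c' b" and ?r = "d / a"
  have a: "a > 0" and r: "?r \<ge> 0" using ab by auto
  have e1: "exp (-1::real) < 1" by simp
  have P0: "?P \<ge> 0" "?Q \<ge> 0" by (simp_all add: log_modulus_nonneg)
  have QP: "?Q \<le> ?P" using ab c e1 by (intro log_modulus_mono) linarith+
  have "\<bar>?P - ?Q\<bar> \<le> 2 * c' * ?P * (a - b) / a" using c by (intro log_modulus_diff_le ab(1-4)) auto
  also have "\<dots> \<le> 2 * c' * ?P * ?r"
    using ab(5) a c P0 by (simp add: divide_right_mono mult_left_mono)
  finally have PQ: "\<bar>?P - ?Q\<bar> \<le> 2 * c' * ?P * ?r" .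
  have "?P * h1 - ?Q * h2 = (?P - ?Q) * h1 + ?Q * (h1 - h2)" by (simp add: algebra_simps)
  then have "\<bar>?P * h1 - ?Q * h2\<bar> \<le> \<bar>?P - ?Q\<bar> * \<bar>h1\<bar> + ?Q * \<bar>h1 - h2\<bar>"
    using P0 by (simp add: abs_mult abs_triangle_ineq[THEN order_trans])
  also have "\<dots> \<le> (2 * c' * ?P * ?r) * B + ?P * (B * ?r)"
    using PQ B P0 QP by (intro add_mono mult_mono) auto
  also have "\<dots> = (2 * c' + 1) * B * (?P * ?r)" by (simp add: algebra_simps)
  also have "\<dots> \<le> (2 * c' + 1) * B * (log_modulus c a * ?r)"
    using log_modulus_antimono_exponent[OF c(2) a ab(3)] B(1) c r
    by (intro mult_left_mono mult_right_mono) auto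
  finally show ?thesis .
qed

lemma D0_sum:
  assumes "finite S" "\<And>i. i \<in> S \<Longrightarrow> D0 a \<Omega> (f i)"
  shows "D0 a \<Omega> (\<lambda>x. \<Sum>i\<in>S. f i x)"
  using assms
proof (induction S rule: finite_induct)
  case empty
  show ?case unfolding D0_def by (auto intro!: exI[of _ 0])
next
  case (insert j S)
  obtain C1 where C1: "\<forall>x\<in>closure \<Omega>. \<forall>y\<in>closure \<Omega>. 0 < dist x y \<and> dist x y < 1 \<longrightarrow>
      \<bar>f j x - f j y\<bar> \<le> C1 * (- ln (dist x y)) powr (- a)"
    using insert.prems unfolding D0_def by blast
  obtain C2 where C2: "\<forall>x\<in>closure \<Omega>. \<forall>y\<in>closure \<Omega>. 0 < dist x y \<and> dist x y < 1 \<longrightarrow>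
      \<bar>(\<Sum>i\<in>S. f i x) - (\<Sum>i\<in>S. f i y)\<bar> \<le> C2 * (- ln (dist x y)) powr (- a)"
    using insert unfolding D0_def by blast
  have "continuous_on (closure \<Omega>) (\<lambda>x. f j x + (\<Sum>i\<in>S. f i x))"
    using insert unfolding D0_def by (intro continuous_on_add) auto
  moreover have "\<bar>(f j x + (\<Sum>i\<in>S. f i x)) - (f j y + (\<Sum>i\<in>S. f i y))\<bar>
      \<le> (C1 + C2) * (- ln (dist x y)) powr (- a)"
    if "x \<in> closure \<Omega>" "y \<in> closure \<Omega>" "0 < dist x y \<and> dist x y < 1" for x y
  proof -
    have "\<bar>(f j x + (\<Sum>i\<in>S. f i x)) - (f j y + (\<Sum>i\<in>S. f i y))\<bar>
        \<le> \<bar>f j x - f j y\<bar> + \<bar>(\<Sum>i\<in>S. f i x) - (\<Sum>i\<in>S. f i y)\<bar>" by linarith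
    also have "\<dots> \<le> C1 * (- ln (dist x y)) powr (- a) + C2 * (- ln (dist x y)) powr (- a)"
      using C1 C2 that by (intro add_mono) auto
    finally show ?thesis by (simp add: distrib_right)
  qed
  ultimately show ?case using insert(1,2) unfolding D0_def by auto
qed

lemma D0_if_small_scale_bound:
  assumes cont: "continuous_on (closure \<Omega>) f" and bd: "bounded \<Omega>"
    and \<delta>: "0 < \<delta>" "\<delta> < 1" and \<gamma>: "\<gamma> \<ge> 0"
    and small: "\<And>x y. x \<in> closure \<Omega> \<Longrightarrow> y \<in> closure \<Omega> \<Longrightarrow> 0 < dist x y \<Longrightarrow> dist x y < \<delta> \<Longrightarrow>
      \<bar>f x - f y\<bar> \<le> K * log_modulus \<gamma> (dist x y)"
  shows "D0 \<gamma> \<Omega> f"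
proof -
  obtain M where M: "\<And>z. z \<in> closure \<Omega> \<Longrightarrow> \<bar>f z\<bar> \<le> M"
    using continuous_on_compact_abs_bound[OF cont] bd compact_closure by blast
  have P\<delta>: "log_modulus \<gamma> \<delta> > 0" using \<delta> by (intro log_modulus_pos)
  define C where "C = \<bar>K\<bar> + 2 * \<bar>M\<bar> / log_modulus \<gamma> \<delta>"
  have "\<bar>f x - f y\<bar> \<le> C * log_modulus \<gamma> (dist x y)"
    if xy: "x \<in> closure \<Omega>" "y \<in> closure \<Omega>" "0 < dist x y" "dist x y < 1" for x y
  proof (cases "dist x y < \<delta>")
    case True
    have "\<bar>f x - f y\<bar> \<le> K * log_modulus \<gamma> (dist x y)" using small xy True by blast
    also have "\<dots> \<le> C * log_modulus \<gamma> (dist x y)"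
      unfolding C_def using P\<delta> log_modulus_nonneg
      by (intro mult_right_mono) (auto intro!: add_increasing2)
    finally show ?thesis .
  next
    case False
    have "\<bar>f x - f y\<bar> \<le> 2 * \<bar>M\<bar>" using M[OF xy(1)] M[OF xy(2)] by linarith
    also have "\<dots> = 2 * \<bar>M\<bar> / log_modulus \<gamma> \<delta> * log_modulus \<gamma> \<delta>" using P\<delta> by simp
    also have "\<dots> \<le> 2 * \<bar>M\<bar> / log_modulus \<gamma> \<delta> * log_modulus \<gamma> (dist x y)"
      using False P\<delta> \<delta> \<gamma> xy by (intro mult_left_mono log_modulus_mono) auto
    also have "\<dots> \<le> C * log_modulus \<gamma> (dist x y)"
      unfolding C_def using log_modulus_nonneg by (intro mult_right_mono) auto
    finally show ?thesis .
  qed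
  then show ?thesis using cont unfolding D0_def log_modulus_def by blast
qed

section \<open>The function \<open>u\<close>\<close>

lemma zero_if_not_in_tsupp: "x \<notin> tsupp f \<Longrightarrow> f x = 0"
  unfolding tsupp_def using closure_subset[of "{x. f x \<noteq> 0}"] by auto

lemma ball_min_subset_punctured:
  fixes x z :: "'a::real_normed_vector"
  assumes "x \<noteq> 0" "norm x < r" "z \<in> ball x (min (r - norm x) (norm x))"
  shows "z \<noteq> 0" "norm z < r"
proof -
  have "dist x z < r - norm x" "dist x z < norm x" using assms(3) by auto
  moreover have "norm z \<le> norm x + dist x z" "norm x \<le> norm z + dist x z"
    using norm_triangle_ineq[of x "z - x"] norm_triangle_ineq[of z "x - z"]
    by (auto simp: dist_norm norm_minus_commute)
  ultimately show "z \<noteq> 0" "norm z < r" by auto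
qed

locale log_counterexample =
  fixes \<zeta> u :: "real^'n::finite \<Rightarrow> real" and \<alpha> :: real
  assumes alpha_pos: "\<alpha> > 0" and zeta_smooth: "smooth_fun \<zeta>" and zeta_supp: "tsupp \<zeta> \<subseteq> ball 0 1"
    and zeta_one: "\<exists>r>0. \<forall>x\<in>ball 0 r. \<zeta> x = 1"
    and u_def: "\<And>x. u x = (if x = 0 then 0 else
                 \<zeta> x * (- ln (norm x)) powr (- \<alpha>) * (\<Sum>i\<in>UNIV. \<Sum>j\<in>UNIV - {i}. x $ i * x $ j))"
begin

lemma u_eq: "u x = (if x = 0 then 0 else \<zeta> x * (- ln (norm x)) powr (- \<alpha>) * cross_sum x)"
  using u_def by (simp add: cross_sum_def)

lemma smooth_on_u: "smooth_on (- {0}) u"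
proof -
  have "(\<lambda>x. \<zeta> x * (- ln (norm x)) powr (- \<alpha>) * cross_sum x) \<in> log_algebra \<zeta>"
    using log_algebra.partials[of "[]" \<zeta>]
    by (intro log_algebra.mult log_algebra.neg_ln_norm_powr cross_sum_in_log_algebra) simp_all
  from log_algebra_smooth_on[OF zeta_smooth this] have inside: "smooth_on (ball 0 1 - {0}) u"
    by (rule smooth_on_transform_open[rotated 2]) (auto simp: u_eq)
  have open_outside: "open (- tsupp \<zeta>)" by (simp add: tsupp_def open_Compl)
  have outside: "smooth_on (- tsupp \<zeta>) u"
    by (rule smooth_on_transform_open[OF open_outside _ smooth_on_zero])
      (simp add: u_eq zero_if_not_in_tsupp)
  have "\<zeta> 0 = 1" using zeta_one by force
  then have "0 \<in> tsupp \<zeta>" using zero_if_not_in_tsupp by force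
  then have "(ball 0 1 - {0}) \<union> - tsupp \<zeta> = - {0}" using zeta_supp by auto
  moreover have "open (ball (0::real^'n) 1 - {0})" by (intro open_Diff) auto
  ultimately show ?thesis using smooth_on_Un[OF _ open_outside inside outside] by simp
qed

text \<open>A radius below which \<open>\<zeta> = 1\<close> and \<open>-ln |x| \<ge> 1\<close>.\<close>

definition rho :: real where
  "rho = (SOME r. 0 < r \<and> r \<le> exp (-1) \<and> (\<forall>x. norm x < r \<longrightarrow> \<zeta> x = 1))"

lemma rho: "rho > 0" "rho \<le> exp (-1)" "rho < 1" "norm x < rho \<Longrightarrow> \<zeta> x = 1"
proof -
  obtain r where "r > 0" "\<forall>x\<in>ball 0 r. \<zeta> x = 1" using zeta_one by blast
  then have "\<exists>r. 0 < r \<and> r \<le> exp (-1) \<and> (\<forall>x. norm x < r \<longrightarrow> \<zeta> x = 1)"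
    by (intro exI[of _ "min r (exp (-1))"]) auto
  from someI_ex[OF this] have rho: "0 < rho \<and> rho \<le> exp (-1) \<and> (\<forall>x. norm x < rho \<longrightarrow> \<zeta> x = 1)"
    unfolding rho_def .
  then show "rho > 0" "rho \<le> exp (-1)" by auto
  have "exp (-1::real) < 1" by simp
  then show "rho < 1" using rho by linarith
  show "norm x < rho \<Longrightarrow> \<zeta> x = 1" using rho by auto
qed

lemma u_near_origin: "x \<noteq> 0 \<Longrightarrow> norm x < rho \<Longrightarrow> u x = (- ln (norm x)) powr (-\<alpha>) * cross_sum x"
  using rho(4) by (simp add: u_eq)

definition partial_u_formula :: "'n \<Rightarrow> real^'n \<Rightarrow> real" where
  "partial_u_formula k x =
     \<alpha> * ((- ln (norm x)) powr (-\<alpha>-1) * (x$k * (cross_sum x * inverse (norm x ^ 2))))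
     + 2 * ((- ln (norm x)) powr (-\<alpha>) * (coord_sum x - x$k))"

definition second_coeff1 :: "'n \<Rightarrow> real^'n \<Rightarrow> real" where
  "second_coeff1 i x = \<alpha> * (cross_sum x * inverse (norm x ^ 2)
      + 4 * (x$i * (coord_sum x - x$i)) * inverse (norm x ^ 2)
      - 2 * (x$i)^2 * cross_sum x * inverse (norm x ^ 2)^2)"

definition second_coeff2 :: "'n \<Rightarrow> real^'n \<Rightarrow> real" where
  "second_coeff2 i x = \<alpha> * (\<alpha> + 1) * ((x$i)^2 * cross_sum x * inverse (norm x ^ 2)^2)"

definition pure_second_formula :: "'n \<Rightarrow> real^'n \<Rightarrow> real" where
  "pure_second_formula i x = log_modulus (\<alpha> + 1) (norm x) * second_coeff1 i x
                           + log_modulus (\<alpha> + 2) (norm x) * second_coeff2 i x"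

lemma has_partial_deriv_neg_ln_powr_cross_sum:
  assumes "x \<noteq> 0" "norm x < 1"
  shows "has_partial_deriv k (\<lambda>x. (- ln (norm x)) powr (-\<alpha>) * cross_sum x) x (partial_u_formula k x)"
  using has_partial_deriv_mult[OF has_partial_deriv_neg_ln_norm_powr[OF assms, of k "-\<alpha>"]
      has_partial_deriv_cross_sum]
  unfolding partial_u_formula_def by (simp add: algebra_simps)

lemma has_partial_deriv_partial_u_formula:
  assumes x: "x \<noteq> 0" "norm x < 1"
  shows "has_partial_deriv i (partial_u_formula i) x (pure_second_formula i x)"
proof -
  let ?L = "- ln (norm x)" and ?a = "(- ln (norm x)) powr (-\<alpha>-1)" and ?I = "inverse (norm x ^ 2)"
  have L: "?L > 0" using x by simp
  have d1: "has_partial_deriv i (\<lambda>x. (- ln (norm x)) powr (-\<alpha>-1)) x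
      ((-(-\<alpha>-1)) * (?L powr (-\<alpha>-1-1) * (x $ i * ?I)))"
    by (rule has_partial_deriv_neg_ln_norm_powr[OF x])
  have d2: "has_partial_deriv i (\<lambda>x. (- ln (norm x)) powr (-\<alpha>)) x ((-(-\<alpha>)) * (?a * (x $ i * ?I)))"
    by (rule has_partial_deriv_neg_ln_norm_powr[OF x])
  have d3: "has_partial_deriv i (\<lambda>x. x $ i) x 1" using has_partial_deriv_component[of i i x] by simp
  have d4: "has_partial_deriv i (\<lambda>x. coord_sum x - x $ i) x (1 - 1)"
    by (rule has_partial_deriv_diff[OF has_partial_deriv_coord_sum d3])
  have D: "has_partial_deriv i (partial_u_formula i) x
    (\<alpha> * (((-(-\<alpha>-1)) * (?L powr (-\<alpha>-1-1) * (x $ i * ?I))) * (x$i * (cross_sum x * ?I))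
       + ?a * (1 * (cross_sum x * ?I) + x $ i * ((2 * (coord_sum x - x $ i)) * ?I
              + cross_sum x * ((-2) * (x $ i * (?I * ?I))))))
     + 2 * (((-(-\<alpha>)) * (?a * (x $ i * ?I))) * (coord_sum x - x $ i) + ?L powr (-\<alpha>) * (1 - 1)))"
    unfolding partial_u_formula_def[abs_def]
    by (intro has_partial_deriv_add has_partial_deriv_cmult has_partial_deriv_mult d1 d2 d3 d4
        has_partial_deriv_inverse_norm_sq[OF x(1)] has_partial_deriv_cross_sum)
  have e1: "?L powr (-\<alpha>-1-1) = ?a / ?L"
    using powr_add[of ?L "-\<alpha>-1" "-1"] L by (simp add: powr_minus divide_inverse)
  have e2: "log_modulus (\<alpha> + 2) (norm x) = ?L powr (-\<alpha>-1-1)"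
    unfolding log_modulus_def by (rule arg_cong[where f="\<lambda>y. ?L powr y"]) simp
  have e3: "?L powr (-\<alpha>) = ?a * ?L"
    using powr_add[of ?L "-\<alpha>-1" 1] L by simp
  have e4: "log_modulus (\<alpha> + 1) (norm x) = ?a"
    by (simp add: log_modulus_def diff_diff_eq[symmetric])
  have identity: "\<alpha> * (((-(-\<alpha>-1)) * ((a/L) * (xi * I))) * (xi * (P * I))
       + a * (1 * (P * I) + xi * ((2 * (s - xi)) * I + P * ((-2) * (xi * (I * I))))))
     + 2 * (((-(-\<alpha>)) * (a * (xi * I))) * (s - xi) + (a * L) * (1 - 1))
     = a * (\<alpha> * (P * I + 4 * (xi * (s - xi)) * I - 2 * xi^2 * P * I^2))
       + (a / L) * (\<alpha> * (\<alpha> + 1) * (xi^2 * P * I^2))" if "L \<noteq> 0" for L a I P s xi :: real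
    using that by (simp add: field_simps power2_eq_square)
  show ?thesis
    using D unfolding pure_second_formula_def second_coeff1_def second_coeff2_def e2 e1 e3 e4
      identity[OF less_imp_neq[OF L, symmetric]] .
qed

lemma has_partial_deriv_u:
  assumes "x \<noteq> 0" "norm x < rho"
  shows "has_partial_deriv k u x (partial_u_formula k x)"
proof (rule has_partial_deriv_transform_ball[OF has_partial_deriv_neg_ln_powr_cross_sum[OF assms(1)]])
  show "norm x < 1" using assms rho by simp
  show "min (rho - norm x) (norm x) > 0" using assms by simp
  fix z assume "z \<in> ball x (min (rho - norm x) (norm x))"
  from ball_min_subset_punctured[OF assms this]
  show "u z = (- ln (norm z)) powr (-\<alpha>) * cross_sum z" using u_near_origin by simp
qed

lemma partial_u: "x \<noteq> 0 \<Longrightarrow> norm x < rho \<Longrightarrow> partial k u x = partial_u_formula k x"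
  using has_partial_deriv_imp_partial[OF has_partial_deriv_u] by blast

lemma has_partial_deriv_partial_u:
  assumes "x \<noteq> 0" "norm x < rho"
  shows "has_partial_deriv i (partial i u) x (pure_second_formula i x)"
proof (rule has_partial_deriv_transform_ball[OF has_partial_deriv_partial_u_formula[OF assms(1)]])
  show "norm x < 1" using assms rho by simp
  show "min (rho - norm x) (norm x) > 0" using assms by simp
  fix z assume "z \<in> ball x (min (rho - norm x) (norm x))"
  from ball_min_subset_punctured[OF assms this] show "partial i u z = partial_u_formula i z"
    using partial_u by simp
qed

lemma pure_second_partial_u:
  "x \<noteq> 0 \<Longrightarrow> norm x < rho \<Longrightarrow> partials [i, i] u x = pure_second_formula i x"
  using has_partial_deriv_imp_partial[OF has_partial_deriv_partial_u] by simp

lemma u_on_axis: "u (t *\<^sub>R axis k 1) = 0"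
  by (simp add: u_eq cross_sum_axis)

lemma has_partial_deriv_u_origin: "has_partial_deriv k u 0 0"
  unfolding has_partial_deriv_def using u_on_axis[of _ k] by simp

lemma partial_u_origin: "has_partial k u 0" "partial k u 0 = 0"
  using has_partial_deriv_imp_partial[OF has_partial_deriv_u_origin] by auto

lemma partial_u_on_own_axis: "\<bar>t\<bar> < rho \<Longrightarrow> partial i u (t *\<^sub>R axis i 1) = 0"
  using partial_u[of "t *\<^sub>R axis i 1" i] partial_u_origin
  by (cases "t = 0") (simp_all add: partial_u_formula_def cross_sum_axis coord_sum_axis)

lemma has_partial_deriv_pure_second_origin: "has_partial_deriv i (partial i u) 0 0"
  by (rule has_partial_deriv_transform_line[OF has_partial_deriv_const rho(1)])
    (simp add: partial_u_on_own_axis)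

lemma pure_second_partial_u_origin: "partials [i, i] u 0 = 0"
  using has_partial_deriv_imp_partial[OF has_partial_deriv_pure_second_origin] by simp

lemma partial_u_on_other_axis:
  assumes "i \<noteq> j" "\<bar>t\<bar> < rho"
  shows "partial j u (t *\<^sub>R axis i 1) = (if t = 0 then 0 else 2 * (t * (- ln \<bar>t\<bar>) powr (-\<alpha>)))"
proof (cases "t = 0")
  case True then show ?thesis using partial_u_origin by simp
next
  case False
  then have "partial j u (t *\<^sub>R axis i 1) = partial_u_formula j (t *\<^sub>R axis i 1)"
    using assms by (intro partial_u) auto
  also have "\<dots> = 2 * (t * (- ln \<bar>t\<bar>) powr (-\<alpha>))"
    unfolding partial_u_formula_def using assms(1)
    by (simp add: cross_sum_axis coord_sum_axis) (simp add: axis_def)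
  finally show ?thesis using False by simp
qed

lemma has_partial_deriv_mixed_second_origin:
  assumes "i \<noteq> j"
  shows "has_partial_deriv i (partial j u) 0 0"
  unfolding has_partial_deriv_def
proof (rule has_field_derivative_transform_within_open[OF DERIV_times_log_modulus_at_0[OF alpha_pos],
      where S="ball 0 rho"])
  fix t :: real assume "t \<in> ball 0 rho"
  then show "(if t = 0 then 0 else 2 * (t * (- ln \<bar>t\<bar>) powr - \<alpha>)) = partial j u (0 + t *\<^sub>R axis i 1)"
    using partial_u_on_other_axis[OF assms] by simp
qed (use rho in auto)

lemma has_partial_deriv_mixed_second_on_axis:
  assumes "i \<noteq> j" "0 < t" "t < rho"
  shows "has_partial_deriv i (partial j u) (t *\<^sub>R axis i 1)
           (2 * (- ln t) powr (-\<alpha>) + 2 * \<alpha> * (- ln t) powr (-\<alpha>-1))"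
  unfolding has_partial_deriv_def
proof (rule has_field_derivative_transform_within_open[where S="ball 0 (min t (rho - t))"
      and f="\<lambda>s. 2 * ((t + s) * (- ln (t + s)) powr (-\<alpha>))"])
  have "- ln t > 0" using assms rho by simp
  then have "((\<lambda>s. 2 * ((t + s) * (- ln (t + s)) powr (-\<alpha>))) has_real_derivative
      2 * (1 * (- ln (t + 0)) powr (-\<alpha>) + (t + 0) * ((-\<alpha>) * (- ln (t + 0)) powr (-\<alpha> - 1) * (- inverse (t + 0)))))
      (at 0)"
    using assms
    by (intro derivative_eq_intros DERIV_fun_powr[where r="-\<alpha>", simplified]) (auto simp: divide_inverse)
  then show "((\<lambda>s. 2 * ((t + s) * (- ln (t + s)) powr (-\<alpha>))) has_real_derivative
      2 * (- ln t) powr (-\<alpha>) + 2 * \<alpha> * (- ln t) powr (-\<alpha>-1)) (at 0)"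
    using assms by (simp add: field_simps)
  fix s :: real assume "s \<in> ball 0 (min t (rho - t))"
  then have "\<bar>t + s\<bar> < rho" "t + s \<noteq> 0" "\<bar>t + s\<bar> = t + s" using assms by auto
  moreover have "t *\<^sub>R axis i 1 + s *\<^sub>R axis i 1 = (t + s) *\<^sub>R axis i (1::real)" by (simp add: scaleR_add_left)
  ultimately show "2 * ((t + s) * (- ln (t + s)) powr (-\<alpha>)) = partial j u (t *\<^sub>R axis i 1 + s *\<^sub>R axis i 1)"
    using partial_u_on_other_axis[OF assms(1), of "t + s"] by simp
qed (use assms in auto)

subsection \<open>The pure second derivatives\<close>

lemma second_coeff1_in_log_algebra: "second_coeff1 i \<in> log_algebra \<zeta>"
proof -
  have "second_coeff1 i = (\<lambda>x. \<alpha> * ((cross_sum x * inverse (norm x ^ 2)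
      + 4 * (x$i * (coord_sum x + (-1) * x$i)) * inverse (norm x ^ 2))
      + (-2) * (x$i * x$i) * cross_sum x * (inverse (norm x ^ 2) * inverse (norm x ^ 2))))"
    by (rule ext) (simp add: second_coeff1_def power2_eq_square algebra_simps)
  also have "\<dots> \<in> log_algebra \<zeta>"
    by (intro log_algebra.intros cross_sum_in_log_algebra coord_sum_in_log_algebra)
  finally show ?thesis .
qed

lemma second_coeff2_in_log_algebra: "second_coeff2 i \<in> log_algebra \<zeta>"
proof -
  have "second_coeff2 i = (\<lambda>x. (\<alpha> * (\<alpha> + 1)) *
      ((x$i * x$i) * cross_sum x * (inverse (norm x ^ 2) * inverse (norm x ^ 2))))"
    by (rule ext) (simp add: second_coeff2_def power2_eq_square algebra_simps)
  also have "\<dots> \<in> log_algebra \<zeta>"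
    by (intro log_algebra.intros cross_sum_in_log_algebra)
  finally show ?thesis .
qed

lemma second_coeff1_scaleR: "c > 0 \<Longrightarrow> second_coeff1 i (c *\<^sub>R x) = second_coeff1 i x"
  by (cases "x = 0")
    (simp_all add: second_coeff1_def cross_sum_scaleR coord_sum_scaleR power_mult_distrib
      power2_eq_square field_simps)

lemma second_coeff2_scaleR: "c > 0 \<Longrightarrow> second_coeff2 i (c *\<^sub>R x) = second_coeff2 i x"
  by (cases "x = 0") (simp_all add: second_coeff2_def cross_sum_scaleR power_mult_distrib power2_eq_square field_simps)

lemma second_coeffs_degree0_bounds:
  "\<exists>B. degree0_bounds (second_coeff1 i) B \<and> degree0_bounds (second_coeff2 i) B"
proof -
  obtain B1 where "degree0_bounds (second_coeff1 i) B1"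
    using degree0_bounds_if_homogeneous[OF log_algebra_smooth_on[OF zeta_smooth second_coeff1_in_log_algebra]
        second_coeff1_scaleR] by blast
  moreover obtain B2 where "degree0_bounds (second_coeff2 i) B2"
    using degree0_bounds_if_homogeneous[OF log_algebra_smooth_on[OF zeta_smooth second_coeff2_in_log_algebra]
        second_coeff2_scaleR] by blast
  ultimately show ?thesis by (meson degree0_bounds_mono max.cobounded1 max.cobounded2)
qed

lemma pure_second_partial_bound:
  assumes B: "degree0_bounds (second_coeff1 i) B" "degree0_bounds (second_coeff2 i) B"
    and z: "norm z < rho" "norm z \<le> 2 * d" and d: "0 < d" "d \<le> 1/4"
  shows "\<bar>partials [i, i] u z\<bar> \<le> 2 * B * 2 powr (\<alpha> + 1) * log_modulus (\<alpha> + 1) d"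
proof (cases "z = 0")
  case True
  then show ?thesis using pure_second_partial_u_origin B log_modulus_nonneg[of "\<alpha> + 1" d]
    unfolding degree0_bounds_def by simp
next
  case False
  let ?P = "log_modulus (\<alpha> + 1) (norm z)" and ?Q = "log_modulus (\<alpha> + 2) (norm z)"
  have QP: "?Q \<le> ?P" using False z rho by (intro log_modulus_antimono_exponent) auto
  have "\<bar>partials [i, i] u z\<bar> \<le> ?P * \<bar>second_coeff1 i z\<bar> + ?Q * \<bar>second_coeff2 i z\<bar>"
    unfolding pure_second_partial_u[OF False z(1)] pure_second_formula_def
    by (simp add: abs_mult log_modulus_nonneg abs_triangle_ineq[THEN order_trans])
  also have "\<dots> \<le> ?P * B + ?P * B"
    using B False QP log_modulus_nonneg unfolding degree0_bounds_def
    by (intro add_mono mult_mono) auto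
  also have "\<dots> \<le> 2 * B * log_modulus (\<alpha> + 1) (2 * d)"
    using False z d B alpha_pos unfolding degree0_bounds_def
    by (simp, intro mult_left_mono log_modulus_mono) auto
  also have "\<dots> \<le> 2 * B * (2 powr (\<alpha> + 1) * log_modulus (\<alpha> + 1) d)"
    using B alpha_pos d unfolding degree0_bounds_def by (intro mult_left_mono log_modulus_double) auto
  finally show ?thesis by (simp add: mult.assoc)
qed

text \<open>When \<open>|x - y| \<le> |x|/2\<close> the two points are at comparable distance from the origin, and the
difference is estimated term by term.\<close>

lemma pure_second_partial_diff_comparable:
  assumes B: "degree0_bounds (second_coeff1 i) B" "degree0_bounds (second_coeff2 i) B"
    and xy: "norm y \<le> norm x" "norm x < rho" "0 < dist x y" "2 * dist x y \<le> norm x"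
  shows "\<bar>partials [i, i] u x - partials [i, i] u y\<bar>
           \<le> (4 * \<alpha> + 8) * B * (2 + \<alpha>) powr (\<alpha> + 1) * log_modulus (\<alpha> + 1) (dist x y)"
proof -
  let ?d = "dist x y" and ?a = "norm x" and ?b = "norm y"
  have tri: "?a \<le> ?b + ?d" using norm_triangle_ineq[of y "x - y"] by (simp add: dist_norm)
  have a: "?a > 0" "x \<noteq> 0" "?a \<le> exp (-1)" "?a \<le> 2 * ?b" "?a - ?b \<le> ?d" using xy tri rho by auto
  have b: "?b > 0" "y \<noteq> 0" "norm y < rho" using a xy by auto
  have B0: "B \<ge> 0" "\<bar>second_coeff1 i x\<bar> \<le> B" "\<bar>second_coeff2 i x\<bar> \<le> B"
    "\<bar>second_coeff1 i x - second_coeff1 i y\<bar> \<le> B * (?d / ?a)"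
    "\<bar>second_coeff2 i x - second_coeff2 i y\<bar> \<le> B * (?d / ?a)"
    using B a(2) xy(4) unfolding degree0_bounds_def by auto
  have t1: "\<bar>log_modulus (\<alpha> + 1) ?a * second_coeff1 i x - log_modulus (\<alpha> + 1) ?b * second_coeff1 i y\<bar>
      \<le> (2 * (\<alpha> + 1) + 1) * B * (log_modulus (\<alpha> + 1) ?a * (?d / ?a))"
    using alpha_pos a b xy B0 by (intro log_modulus_product_diff_le) auto
  have t2: "\<bar>log_modulus (\<alpha> + 2) ?a * second_coeff2 i x - log_modulus (\<alpha> + 2) ?b * second_coeff2 i y\<bar>
      \<le> (2 * (\<alpha> + 2) + 1) * B * (log_modulus (\<alpha> + 1) ?a * (?d / ?a))"
    using alpha_pos a b xy B0 by (intro log_modulus_product_diff_le) auto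
  have "\<bar>partials [i, i] u x - partials [i, i] u y\<bar>
      \<le> \<bar>log_modulus (\<alpha> + 1) ?a * second_coeff1 i x - log_modulus (\<alpha> + 1) ?b * second_coeff1 i y\<bar>
        + \<bar>log_modulus (\<alpha> + 2) ?a * second_coeff2 i x - log_modulus (\<alpha> + 2) ?b * second_coeff2 i y\<bar>"
    unfolding pure_second_partial_u[OF a(2) xy(2)] pure_second_partial_u[OF b(2,3)]
      pure_second_formula_def by linarith
  also have "\<dots> \<le> (2 * (\<alpha> + 1) + 1) * B * (log_modulus (\<alpha> + 1) ?a * (?d / ?a))
      + (2 * (\<alpha> + 2) + 1) * B * (log_modulus (\<alpha> + 1) ?a * (?d / ?a))"
    using t1 t2 by (rule add_mono)
  also have "\<dots> = (4 * \<alpha> + 8) * B * (log_modulus (\<alpha> + 1) ?a * (?d / ?a))"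
  proof -
    have "(2 * (\<alpha> + 1) + 1) * B * X + (2 * (\<alpha> + 2) + 1) * B * X = (4 * \<alpha> + 8) * B * X" for X
      by (simp add: algebra_simps)
    then show ?thesis .
  qed
  also have "\<dots> \<le> (4 * \<alpha> + 8) * B * ((2 + \<alpha>) powr (\<alpha> + 1) * log_modulus (\<alpha> + 1) ?d)"
    using log_modulus_times_ratio_le[of "\<alpha> + 1" ?d ?a] a xy B0 alpha_pos
    by (intro mult_left_mono) (auto simp: add.commute)
  finally show ?thesis by (simp add: mult.assoc)
qed

lemma pure_second_partial_near_origin:
  "\<exists>K\<ge>0. \<forall>x y. norm x < rho \<longrightarrow> norm y < rho \<longrightarrow> 0 < dist x y \<longrightarrow> dist x y \<le> 1/4 \<longrightarrow>
      \<bar>partials [i, i] u x - partials [i, i] u y\<bar> \<le> K * log_modulus (\<alpha> + 1) (dist x y)"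
proof -
  obtain B where B: "degree0_bounds (second_coeff1 i) B" "degree0_bounds (second_coeff2 i) B"
    using second_coeffs_degree0_bounds by blast
  define K where "K = 4 * B * 2 powr (\<alpha> + 1) + (4 * \<alpha> + 8) * B * (2 + \<alpha>) powr (\<alpha> + 1)"
  have "B \<ge> 0" using B unfolding degree0_bounds_def by simp
  then have K: "K \<ge> 0" "4 * B * 2 powr (\<alpha> + 1) \<le> K" "(4 * \<alpha> + 8) * B * (2 + \<alpha>) powr (\<alpha> + 1) \<le> K"
    unfolding K_def using alpha_pos by simp_all
  have ordered: "\<bar>partials [i, i] u x - partials [i, i] u y\<bar> \<le> K * log_modulus (\<alpha> + 1) (dist x y)"
    if xy: "norm y \<le> norm x" "norm x < rho" "0 < dist x y" "dist x y \<le> 1/4" for x y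
  proof (cases "norm x \<le> 2 * dist x y")
    case True
    have "\<bar>partials [i, i] u x - partials [i, i] u y\<bar> \<le> \<bar>partials [i, i] u x\<bar> + \<bar>partials [i, i] u y\<bar>"
      by simp
    also have "\<dots> \<le> 4 * B * 2 powr (\<alpha> + 1) * log_modulus (\<alpha> + 1) (dist x y)"
      using pure_second_partial_bound[OF B, of x "dist x y"] pure_second_partial_bound[OF B, of y "dist x y"]
        True xy by simp
    also have "\<dots> \<le> K * log_modulus (\<alpha> + 1) (dist x y)"
      using K log_modulus_nonneg by (intro mult_right_mono) auto
    finally show ?thesis .
  next
    case False
    then have "\<bar>partials [i, i] u x - partials [i, i] u y\<bar>
        \<le> (4 * \<alpha> + 8) * B * (2 + \<alpha>) powr (\<alpha> + 1) * log_modulus (\<alpha> + 1) (dist x y)"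
      using xy by (intro pure_second_partial_diff_comparable[OF B]) auto
    also have "\<dots> \<le> K * log_modulus (\<alpha> + 1) (dist x y)"
      using K log_modulus_nonneg by (intro mult_right_mono) auto
    finally show ?thesis .
  qed
  have "\<bar>partials [i, i] u x - partials [i, i] u y\<bar> \<le> K * log_modulus (\<alpha> + 1) (dist x y)"
    if "norm x < rho" "norm y < rho" "0 < dist x y" "dist x y \<le> 1/4" for x y
  proof (cases "norm y \<le> norm x")
    case False
    then show ?thesis using ordered[of x y] that by (simp add: dist_commute abs_minus_commute)
  qed (use ordered that in blast)
  then show ?thesis using K(1) by blast
qed

lemma continuous_pure_second_partial: "continuous (at x) (partials [i, i] u)"
proof (cases "x = 0")
  case False
  have "continuous_on (- {0}) (partials [i, i] u)" using smooth_on_u unfolding smooth_on_def by blast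
  then show ?thesis using False by (simp add: continuous_on_eq_continuous_at open_Compl)
next
  case True
  obtain K where K: "K \<ge> 0" "\<And>x y. norm x < rho \<Longrightarrow> norm y < rho \<Longrightarrow> 0 < dist x y \<Longrightarrow> dist x y \<le> 1/4 \<Longrightarrow>
      \<bar>partials [i, i] u x - partials [i, i] u y\<bar> \<le> K * log_modulus (\<alpha> + 1) (dist x y)"
    using pure_second_partial_near_origin[of i] by blast
  have "eventually (\<lambda>z::real^'n. z \<in> ball 0 (min rho (1/4))) (at 0)"
    by (rule eventually_at_in_open') (use rho in auto)
  moreover have "eventually (\<lambda>z::real^'n. z \<noteq> 0) (at 0)" by (simp add: eventually_at_filter)
  ultimately have "eventually (\<lambda>z. norm (partials [i, i] u z) \<le> K * log_modulus (\<alpha> + 1) (norm z)) (at 0)"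
    by eventually_elim (use K(2)[of _ 0] pure_second_partial_u_origin rho in simp)
  moreover have "((\<lambda>z. K * log_modulus (\<alpha> + 1) (norm z)) \<longlongrightarrow> 0) (at (0::real^'n))"
    using tendsto_mult_right_zero[OF log_modulus_norm_tendsto_0[of "\<alpha> + 1"], of K] alpha_pos by simp
  ultimately have "(partials [i, i] u \<longlongrightarrow> 0) (at 0)" by (rule Lim_null_comparison)
  then show ?thesis using True pure_second_partial_u_origin by (simp add: continuous_at)
qed

lemma pure_second_partial_lipschitz_away:
  "\<exists>C\<ge>0. \<forall>x y. rho/2 \<le> norm x \<longrightarrow> norm x \<le> R \<longrightarrow> dist x y \<le> rho/4 \<longrightarrow>
      \<bar>partials [i, i] u x - partials [i, i] u y\<bar> \<le> C * dist x y"
proof -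
  have "rho/4 > 0" "{z. rho/4 \<le> norm z \<and> norm z \<le> R + rho/4} \<subseteq> - {0}" using rho(1) by auto
  from smooth_on_lipschitz_on_annulus[OF smooth_on_partials[OF smooth_on_u, of "[i, i]"] this]
  show ?thesis by simp
qed

lemma D0_pure_second_partial:
  assumes "bounded \<Omega>"
  shows "D0 (\<alpha> + 1) \<Omega> (partials [i, i] u)"
proof -
  let ?f = "partials [i, i] u" and ?M = "(2 + \<alpha>) powr (\<alpha> + 1)"
  obtain R where R: "\<And>z. z \<in> closure \<Omega> \<Longrightarrow> norm z \<le> R"
    using bounded_closure[OF assms] unfolding bounded_iff by blast
  obtain K where K: "K \<ge> 0" "\<And>x y. norm x < rho \<Longrightarrow> norm y < rho \<Longrightarrow> 0 < dist x y \<Longrightarrow> dist x y \<le> 1/4 \<Longrightarrow>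
      \<bar>?f x - ?f y\<bar> \<le> K * log_modulus (\<alpha> + 1) (dist x y)"
    using pure_second_partial_near_origin[of i] by blast
  obtain C where C: "C \<ge> 0" "\<forall>x y. rho/2 \<le> norm x \<longrightarrow> norm x \<le> R \<longrightarrow> dist x y \<le> rho/4 \<longrightarrow>
      \<bar>?f x - ?f y\<bar> \<le> C * dist x y"
    using pure_second_partial_lipschitz_away[of R i] by blast
  define \<delta> where "\<delta> = min (rho/4) (1/4)"
  have \<delta>: "0 < \<delta>" "\<delta> < 1" "\<delta> \<le> rho/4" "\<delta> \<le> 1/4" unfolding \<delta>_def using rho by auto
  have PM: "log_modulus (\<alpha> + 1) d \<ge> 0" "?M \<ge> 0" for d by (simp_all add: log_modulus_nonneg)
  show ?thesis
  proof (rule D0_if_small_scale_bound[where \<delta>=\<delta> and K="K + C * ?M"])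
    show "continuous_on (closure \<Omega>) ?f"
      using continuous_pure_second_partial by (intro continuous_at_imp_continuous_on) auto
    fix x y assume xy: "x \<in> closure \<Omega>" "y \<in> closure \<Omega>" "0 < dist x y" "dist x y < \<delta>"
    have tri: "norm x \<le> norm y + dist x y" "norm y \<le> norm x + dist x y"
      using norm_triangle_ineq[of y "x - y"] norm_triangle_ineq[of x "y - x"]
      by (auto simp: dist_norm norm_minus_commute)
    consider "norm x < rho/2 \<or> norm y < rho/2" | "rho/2 \<le> norm x" by linarith
    then show "\<bar>?f x - ?f y\<bar> \<le> (K + C * ?M) * log_modulus (\<alpha> + 1) (dist x y)"
    proof cases
      case 1
      then have "\<bar>?f x - ?f y\<bar> \<le> K * log_modulus (\<alpha> + 1) (dist x y)"
        using tri xy \<delta> by (intro K(2)) auto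
      also have "\<dots> \<le> (K + C * ?M) * log_modulus (\<alpha> + 1) (dist x y)"
        using C(1) PM by (intro mult_right_mono) auto
      finally show ?thesis .
    next
      case 2
      then have "\<bar>?f x - ?f y\<bar> \<le> C * dist x y"
        using C(2) R[OF xy(1)] xy(4) \<delta>(3) by simp
      also have "\<dots> \<le> C * (?M * log_modulus (\<alpha> + 1) (dist x y))"
        using le_log_modulus[of "\<alpha> + 1" "dist x y"] C(1) alpha_pos xy \<delta>
        by (intro mult_left_mono) (auto simp: add.commute)
      also have "\<dots> \<le> (K + C * ?M) * log_modulus (\<alpha> + 1) (dist x y)"
        using K(1) PM by (simp add: distrib_right)
      finally show ?thesis .
    qed
  qed (use assms \<delta> alpha_pos in auto)
qed

subsection \<open>The mixed second derivatives\<close>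

lemma mixed_second_partial_not_D0:
  assumes ij: "i \<noteq> j" and \<beta>: "\<beta> > \<alpha>" and "open \<Omega>" "0 \<in> \<Omega>"
  shows "\<not> D0 \<beta> \<Omega> (partials [i, j] u)"
proof
  assume "D0 \<beta> \<Omega> (partials [i, j] u)"
  then obtain C where C: "\<And>x y. x \<in> closure \<Omega> \<Longrightarrow> y \<in> closure \<Omega> \<Longrightarrow> 0 < dist x y \<and> dist x y < 1 \<Longrightarrow>
      \<bar>partials [i, j] u x - partials [i, j] u y\<bar> \<le> C * (- ln (dist x y)) powr (- \<beta>)"
    unfolding D0_def by blast
  obtain e where e: "e > 0" "ball 0 e \<subseteq> \<Omega>" using assms(3,4) open_contains_ball by blast
  obtain t where t: "0 < t" "t < min e rho" "C * (- ln t) powr (\<alpha> - \<beta>) < 2"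
    using exists_small_neg_ln_powr[of "\<alpha> - \<beta>" "min e rho" 2 C] \<beta> e rho by auto
  let ?x = "t *\<^sub>R axis i (1::real)"
  have L: "- ln t > 0" using t rho by simp
  have "?x \<in> closure \<Omega>" "0 \<in> closure \<Omega>" "dist ?x 0 = t"
    using t e closure_subset assms(4) by fastforce+
  then have "partials [i, j] u ?x \<le> C * (- ln t) powr (- \<beta>)"
    using C[of ?x 0] has_partial_deriv_imp_partial[OF has_partial_deriv_mixed_second_origin[OF ij]] t rho
    by force
  moreover have "2 * (- ln t) powr (-\<alpha>) \<le> partials [i, j] u ?x"
    using has_partial_deriv_imp_partial[OF has_partial_deriv_mixed_second_on_axis[OF ij t(1)]] t alpha_pos L
    by simp
  ultimately have "2 * (- ln t) powr (-\<alpha>) * (- ln t) powr \<alpha> \<le> C * (- ln t) powr (- \<beta>) * (- ln t) powr \<alpha>"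
    by (intro mult_right_mono) auto
  moreover have "(- ln t) powr (-\<alpha>) * (- ln t) powr \<alpha> = 1" using L by (simp add: powr_add[symmetric])
  moreover have "(- ln t) powr (- \<beta>) * (- ln t) powr \<alpha> = (- ln t) powr (\<alpha> - \<beta>)"
    by (simp add: powr_add[symmetric])
  ultimately have "2 \<le> C * (- ln t) powr (\<alpha> - \<beta>)" by (simp add: mult.assoc)
  then show False using t(3) by simp
qed

end

theorem mainTheorem2:
  fixes \<Omega> :: "(real^'n) set" and lam \<alpha> :: real and \<zeta> u :: "real^'n \<Rightarrow> real"
  assumes n2: "CARD('n) \<ge> 2"
    and dom: "admissible_domain lam \<Omega>"
    and alpha: "\<alpha> > 0"
    and zeta_smooth: "smooth_fun \<zeta>"
    and zeta_supp: "tsupp \<zeta> \<subseteq> ball 0 1"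
    and zeta_one: "\<exists>r>0. \<forall>x\<in>ball 0 r. \<zeta> x = 1"
    and zero_in: "0 \<in> \<Omega>"
    and supp_in: "tsupp \<zeta> \<subseteq> \<Omega>"
    and u_def: "\<And>x. u x = (if x = 0 then 0 else
                 \<zeta> x * (- ln (norm x)) powr (- \<alpha>) * (\<Sum>i\<in>UNIV. \<Sum>j\<in>UNIV - {i}. x $ i * x $ j))"
  shows "(\<forall>x\<in>frontier \<Omega>. u x = 0)
       \<and> (\<forall>i j x. has_partial j u x \<and> has_partial i (partial j u) x)
       \<and> (\<forall>i. D0 (\<alpha> + 1) \<Omega> (partials [i, i] u))
       \<and> D0 (\<alpha> + 1) \<Omega> (\<lambda>x. \<Sum>i\<in>UNIV. partials [i, i] u x)
       \<and> (\<forall>i j. i \<noteq> j \<longrightarrow> (\<forall>\<beta>>\<alpha>. \<not> D0 \<beta> \<Omega> (partials [i, j] u)))"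
proof -
  interpret log_counterexample \<zeta> u \<alpha>
    using alpha zeta_smooth zeta_supp zeta_one u_def by unfold_locales auto
  have "open \<Omega>" "bounded \<Omega>" using dom unfolding admissible_domain_def by auto
  have "u x = 0" if "x \<in> frontier \<Omega>" for x
    using that \<open>open \<Omega>\<close> supp_in zero_if_not_in_tsupp[of x \<zeta>]
    by (auto simp: u_eq frontier_def interior_open)
  moreover have "has_partial j u x \<and> has_partial i (partial j u) x" for i j x
  proof (cases "x = 0")
    case True
    then show ?thesis using partial_u_origin has_partial_deriv_imp_partial
        has_partial_deriv_pure_second_origin has_partial_deriv_mixed_second_origin by metis
  next
    case False
    then show ?thesis using smooth_on_u unfolding smooth_on_def by (metis ComplI partials.simps singletonD)
  qed
  moreover have "D0 (\<alpha> + 1) \<Omega> (partials [i, i] u)" for i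
    using D0_pure_second_partial[OF \<open>bounded \<Omega>\<close>] .
  ultimately show ?thesis
    using mixed_second_partial_not_D0[OF _ _ \<open>open \<Omega>\<close> zero_in] by (auto intro: D0_sum)
qed

end
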